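(* Consider the Physarum dynamics on $G$ with arbitrary initial diameters $D_e(0)>0$. Then the dynamics are attracted by $\mathcal E^*$, i.e. $\operatorname{dist}(D(t),\mathcal E^* )\to 0$ as $t\to\infty$ (distance measured in any $L_p$-norm on $\mathbb R^E$). If the shortest $s_0$-$s_1$ path is unique, then $D(t)$ converges to the vector that equals $1$ on every edge of the shortest $s_0$-$s_1$ path and $0$ on every other edge.
   Context: Let $G=(N,E)$ be a finite connected undirected graph with $n=|N|$ vertices and $m=|E|$ edges, and two distinct vertices $s_0$ (source) and $s_1$ (sink). Each edge $e$ has a fixed length $L_e>0$. Each edge has a time-dependent diameter $D_e(t)$ with $D_e(0)>0$, and resistance $R_e=L_e/D_e$. At each time $t$, the vertex potentials $p_v$ (normalized by $p_{s_1}=0$) are the solution of $\sum_{u\in\delta(v)}(p_v-p_u)/R_{uv}=b_v$ for all $v$, where $\delta(v)$ is the set of neighbours of $v$, $b_{s_0}=1$, $b_{s_1}=-1$, $b_v=0$ otherwise; for an edge $e=\{u,v\}$ with an arbitrarily fixed orientation $(u,v)$ the current is $Q_e=(p_u-p_v)/R_e=D_e(p_u-p_v)/L_e$ (so $Q$ is the electrical $s_0$-$s_1$ flow of value 1). The diameters evolve by $\dot D_e(t)=|Q_e(t)|-D_e(t)$ for all $e\in E$ (the "Physarum dynamics"). Let $L^*$ be the length of a shortest $s_0$-$s_1$ path (length of a path = sum of $L_e$ over its edges), let $E_0$ be the set of edges lying on at least one shortest $s_0$-$s_1$ path, and $G_0=(N,E_0)$. Each edge $\{u,v\}\in E_0$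 is oriented from the endpoint farther from $s_1$ to the one nearer to $s_1$ (shortest-path distance). $\mathcal E^*\subseteq\mathbb R^E_{\ge0}$ is the set of vectors $x$ with $x_e=0$ for $e\notin E_0$ such that $x$, viewed on the oriented edges of $E_0$, is an $s_0$-$s_1$ flow of value one (equivalently, the set of minimum-cost $s_0$-$s_1$ flows of value one, cost $\sum_e L_e x_e$). *)

theory Defs
  imports Complex_Main
begin

definition simple_graph :: "'v set \<Rightarrow> 'v set set \<Rightarrow> bool" where
  "simple_graph N E \<longleftrightarrow> finite N \<and>
     (\<forall>e\<in>E. \<exists>u v. u \<noteq> v \<and> u \<in> N \<and> v \<in> N \<and> e = {u, v})"

definition walk :: "'v set set \<Rightarrow> 'v list \<Rightarrow> bool" where
  "walk E xs \<longleftrightarrow> xs \<noteq> [] \<and> (\<forall>i < length xs - 1. {xs ! i, xs ! Suc i} \<in> E)"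

definition path_edges :: "'v list \<Rightarrow> 'v set set" where
  "path_edges xs = {{xs ! i, xs ! Suc i} | i. i < length xs - 1}"

definition path_len :: "('v set \<Rightarrow> real) \<Rightarrow> 'v list \<Rightarrow> real" where
  "path_len L xs = (\<Sum>i < length xs - 1. L {xs ! i, xs ! Suc i})"

definition spath :: "'v set set \<Rightarrow> 'v \<Rightarrow> 'v \<Rightarrow> 'v list \<Rightarrow> bool" where
  "spath E v w xs \<longleftrightarrow> walk E xs \<and> distinct xs \<and> hd xs = v \<and> last xs = w"

definition sdist :: "'v set set \<Rightarrow> ('v set \<Rightarrow> real) \<Rightarrow> 'v \<Rightarrow> 'v \<Rightarrow> real" where
  "sdist E L v w = Inf (path_len L ` {xs. spath E v w xs})"

definition connected_graph :: "'v set \<Rightarrow> 'v set set \<Rightarrow> bool" where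
  "connected_graph N E \<longleftrightarrow> (\<forall>u\<in>N. \<forall>v\<in>N. \<exists>xs. spath E u v xs)"

definition shortest_path :: "'v set set \<Rightarrow> ('v set \<Rightarrow> real) \<Rightarrow> 'v \<Rightarrow> 'v \<Rightarrow> 'v list \<Rightarrow> bool" where
  "shortest_path E L s0 s1 xs \<longleftrightarrow> spath E s0 s1 xs \<and> path_len L xs = sdist E L s0 s1"

definition E0 :: "'v set set \<Rightarrow> ('v set \<Rightarrow> real) \<Rightarrow> 'v \<Rightarrow> 'v \<Rightarrow> 'v set set" where
  "E0 E L s0 s1 = {e \<in> E. \<exists>xs. shortest_path E L s0 s1 xs \<and> e \<in> path_edges xs}"

definition bvec :: "'v \<Rightarrow> 'v \<Rightarrow> 'v \<Rightarrow> real" where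
  "bvec s0 s1 v = (if v = s0 then 1 else if v = s1 then -1 else 0)"

text \<open>Set of minimum-cost flows: flows of value one on G0, each edge oriented from the
  endpoint farther from s1 to the endpoint nearer to s1.\<close>
definition Estar :: "'v set \<Rightarrow> 'v set set \<Rightarrow> ('v set \<Rightarrow> real) \<Rightarrow> 'v \<Rightarrow> 'v \<Rightarrow> ('v set \<Rightarrow> real) set" where
  "Estar N E L s0 s1 = {x. (\<forall>e. x e \<ge> 0) \<and> (\<forall>e. e \<notin> E0 E L s0 s1 \<longrightarrow> x e = 0) \<and>
     (\<forall>w\<in>N. (\<Sum>u \<in> {u \<in> N. {w, u} \<in> E0 E L s0 s1}.
          (if sdist E L u s1 < sdist E L w s1 then x {w, u} else - x {w, u})) = bvec s0 s1 w)}"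

text \<open>Potentials: solution of the Kirchhoff equations with conductances D_e/L_e,
  normalised by p s1 = 0.\<close>
definition is_potential :: "'v set \<Rightarrow> 'v set set \<Rightarrow> ('v set \<Rightarrow> real) \<Rightarrow> ('v set \<Rightarrow> real)
    \<Rightarrow> 'v \<Rightarrow> 'v \<Rightarrow> ('v \<Rightarrow> real) \<Rightarrow> bool" where
  "is_potential N E L d s0 s1 p \<longleftrightarrow> p s1 = 0 \<and>
     (\<forall>v\<in>N. (\<Sum>u \<in> {u \<in> N. {u, v} \<in> E}. (p v - p u) * d {u, v} / L {u, v}) = bvec s0 s1 v)"

text \<open>Arbitrarily fixed orientation (u,v) of an edge e = {u,v}.\<close>
definition orient :: "'v set \<Rightarrow> 'v \<times> 'v" where
  "orient e = (SOME uv. e = {fst uv, snd uv} \<and> fst uv \<noteq> snd uv)"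

definition current :: "('v set \<Rightarrow> real) \<Rightarrow> ('v set \<Rightarrow> real) \<Rightarrow> ('v \<Rightarrow> real) \<Rightarrow> 'v set \<Rightarrow> real" where
  "current L d p e = d e * (p (fst (orient e)) - p (snd (orient e))) / L e"

definition lp_setdist :: "real \<Rightarrow> 'e set \<Rightarrow> ('e \<Rightarrow> real) \<Rightarrow> ('e \<Rightarrow> real) set \<Rightarrow> real" where
  "lp_setdist q E y S = Inf ((\<lambda>x. (\<Sum>e\<in>E. \<bar>y e - x e\<bar> powr q) powr (1 / q)) ` S)"

definition linf_setdist :: "'e set \<Rightarrow> ('e \<Rightarrow> real) \<Rightarrow> ('e \<Rightarrow> real) set \<Rightarrow> real" where
  "linf_setdist E y S = Inf ((\<lambda>x. Max ((\<lambda>e. \<bar>y e - x e\<bar>) ` E)) ` S)"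

end

theory Submission
  imports Defs
begin

text \<open>At every time the currents form the electrical unit flow for conductances D/L. For a fixed
  shortest path P0 the Lyapunov function lyap t = (sum over P0 of L e ln (D t e)) - Lstar ln (vol t),
  with vol t = (sum of L e D t e), is nondecreasing and bounded, and its rate dominates the
  excess of the current cost over the shortest path length Lstar. Hence volume and cost stay
  bounded, and both the current on non-tight edges (edges that are not steepest-descent edges of
  the distances) and the defect of Kirchhoff's law in the tight orientation are controlled by an
  integrable rate; by a relaxation lemma for y' = f - y the diameters of non-tight edges and the
  Kirchhoff residuals tend to zero. By compactness every limit point of D is then a nonnegative
  unit flow in the tight orientation, and such flows vanish outside E0 and lie in Estar.\<close>

section \<open>Walks, paths and their lengths\<close>

abbreviation "pedge P i \<equiv> {P ! i, P ! Suc i}"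

text \<open>Recursive versions of path length and of the walk predicate, convenient for induction;
  they agree with the index-based definitions path_len and walk.\<close>
fun rlen :: "('v set \<Rightarrow> real) \<Rightarrow> 'v list \<Rightarrow> real" where
  "rlen L [] = 0" | "rlen L [a] = 0" | "rlen L (a#b#xs) = L {a,b} + rlen L (b#xs)"

fun rwalk :: "'v set set \<Rightarrow> 'v list \<Rightarrow> bool" where
  "rwalk E [] = False" | "rwalk E [a] = True" | "rwalk E (a#b#xs) = ({a,b} \<in> E \<and> rwalk E (b#xs))"

lemma path_len_rlen: "path_len L xs = rlen L xs"
proof (induction L xs rule: rlen.induct)
  case (3 L a b xs)
  have "path_len L (a#b#xs) = (\<Sum>i<Suc (length xs). L {(a#b#xs) ! i, (a#b#xs) ! Suc i})"
    by (simp add: path_len_def)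
  also have "\<dots> = L {a,b} + (\<Sum>i<length xs. L {(b#xs) ! i, (b#xs) ! Suc i})"
    by (subst sum.lessThan_Suc_shift) simp
  also have "\<dots> = L {a,b} + path_len L (b#xs)" by (simp add: path_len_def)
  finally show ?case using 3 by simp
qed (auto simp: path_len_def)

lemma walk_rwalk: "walk E xs = rwalk E xs"
proof (induction E xs rule: rwalk.induct)
  case (3 E a b xs)
  have "walk E (a#b#xs) \<longleftrightarrow> (\<forall>i<Suc (length xs). {(a#b#xs) ! i, (a#b#xs) ! Suc i} \<in> E)"
    by (simp add: walk_def)
  also have "\<dots> \<longleftrightarrow> {a,b} \<in> E \<and> (\<forall>i<length xs. {(b#xs) ! i, (b#xs) ! Suc i} \<in> E)"
    by (auto simp: less_Suc_eq_0_disj)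
  also have "\<dots> \<longleftrightarrow> {a,b} \<in> E \<and> walk E (b#xs)" by (simp add: walk_def)
  finally show ?case using 3 by simp
qed (auto simp: walk_def)

lemma rlen_append: "xs \<noteq> [] \<Longrightarrow> ys \<noteq> [] \<Longrightarrow>
   rlen L (xs @ ys) = rlen L xs + L {last xs, hd ys} + rlen L ys"
proof (induction L xs rule: rlen.induct)
  case (2 L a) then show ?case by (cases ys) auto
next
  case (3 L a b xs) then show ?case by simp
qed simp

lemma rwalk_append: "xs \<noteq> [] \<Longrightarrow> ys \<noteq> [] \<Longrightarrow>
   rwalk E (xs @ ys) \<longleftrightarrow> rwalk E xs \<and> {last xs, hd ys} \<in> E \<and> rwalk E ys"
proof (induction E xs rule: rwalk.induct)
  case (2 E a) then show ?case by (cases ys) auto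
next
  case (3 E a b xs) then show ?case by auto
qed simp

lemma rlen_rev: "rlen L (rev xs) = rlen L xs"
proof (induction L xs rule: rlen.induct)
  case (3 L a b xs)
  have "rlen L (rev (a#b#xs)) = rlen L (rev (b#xs) @ [a])" by simp
  also have "\<dots> = rlen L (rev (b#xs)) + L {b,a}"
    by (subst rlen_append) (auto simp: last_rev)
  finally show ?case using 3 by (simp add: insert_commute)
qed auto

lemma rwalk_rev: "rwalk E (rev xs) = rwalk E xs"
proof (induction E xs rule: rwalk.induct)
  case (3 E a b xs)
  have "rwalk E (rev (a#b#xs)) = rwalk E (rev (b#xs) @ [a])" by simp
  also have "\<dots> = (rwalk E (rev (b#xs)) \<and> {b,a} \<in> E)"
    by (subst rwalk_append) (auto simp: last_rev)
  finally show ?case using 3 by (auto simp: insert_commute)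
qed auto

lemma spath_rev: "spath E v w xs \<Longrightarrow> spath E w v (rev xs)"
  by (auto simp: spath_def walk_rwalk rwalk_rev hd_rev last_rev)

lemma rlen_Cons_ge: "rlen L (a # xs) \<ge> rlen L xs" if "rwalk E (a#xs)" "\<forall>e\<in>E. L e > 0"
  using that by (cases xs) (auto intro: less_imp_le)

lemma rlen_nonneg: "rwalk E xs \<Longrightarrow> \<forall>e\<in>E. L e > 0 \<Longrightarrow> rlen L xs \<ge> 0"
  by (induction E xs rule: rwalk.induct) (auto intro!: add_nonneg_nonneg less_imp_le)

lemma rlen_pos: "rwalk E xs \<Longrightarrow> \<forall>e\<in>E. L e > 0 \<Longrightarrow> length xs \<ge> 2 \<Longrightarrow> rlen L xs > 0"
proof (induction E xs rule: rwalk.induct)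
  case (3 E a b xs)
  then show ?case using rlen_nonneg[of E "b#xs" L] by (auto intro!: add_pos_nonneg)
qed auto

lemma rlen_drop_le: "rwalk E xs \<Longrightarrow> \<forall>e\<in>E. L e > 0 \<Longrightarrow> k < length xs \<Longrightarrow> rlen L (drop k xs) \<le> rlen L xs"
proof (induction k arbitrary: xs)
  case (Suc k)
  then obtain a ys where xs: "xs = a # ys" by (cases xs) auto
  with Suc have "ys \<noteq> []" by auto
  then have "rwalk E ys" using Suc.prems xs by (cases ys) auto
  then have "rlen L (drop k ys) \<le> rlen L ys" using Suc xs by auto
  moreover have "rlen L ys \<le> rlen L (a#ys)" using rlen_Cons_ge[of E a ys L] Suc xs by auto
  ultimately show ?case using xs by simp
qed simp

lemma rwalk_drop: "rwalk E xs \<Longrightarrow> k < length xs \<Longrightarrow> rwalk E (drop k xs)"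
proof (induction k arbitrary: xs)
  case (Suc k)
  then obtain a ys where xs: "xs = a # ys" by (cases xs) auto
  with Suc have "ys \<noteq> []" by auto
  then have "rwalk E ys" using Suc.prems xs by (cases ys) auto
  then show ?case using Suc xs by auto
qed simp

lemma rlen_split: "rlen L (xs @ y # zs) = rlen L (xs @ [y]) + rlen L (y # zs)"
proof (cases zs)
  case Nil then show ?thesis by (cases xs) (auto simp: rlen_append)
next
  case (Cons z zs')
  have "rlen L ((xs @ [y]) @ zs) = rlen L (xs @ [y]) + L {y, z} + rlen L zs"
    by (subst rlen_append) (auto simp: Cons)
  then show ?thesis using Cons by simp
qed

lemma rwalk_split: "rwalk E (xs @ y # zs) \<longleftrightarrow> rwalk E (xs @ [y]) \<and> rwalk E (y # zs)"
proof (cases zs)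
  case Nil then show ?thesis by (cases xs) (auto simp: rwalk_append)
next
  case (Cons z zs')
  have "rwalk E ((xs @ [y]) @ zs) = (rwalk E (xs @ [y]) \<and> {y, z} \<in> E \<and> rwalk E zs)"
    by (subst rwalk_append) (auto simp: Cons)
  then show ?thesis using Cons by simp
qed

lemma path_edges_append: assumes "xs \<noteq> []" "ys \<noteq> []" shows "{last xs, hd ys} \<in> path_edges (xs @ ys)"
proof -
  obtain y ys' where ys: "ys = y # ys'" using assms by (cases ys) auto
  have l: "length xs > 0" using assms by simp
  have "(xs @ ys) ! (length xs - 1) = last xs" using assms by (simp add: nth_append last_conv_nth)
  moreover have "(xs @ ys) ! Suc (length xs - 1) = hd ys" using l ys by (simp add: nth_append)
  moreover have "length xs - 1 < length (xs @ ys) - 1" using assms ys by (cases xs) auto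
  ultimately have "{last xs, hd ys} = {(xs @ ys) ! (length xs - 1), (xs @ ys) ! Suc (length xs - 1)}
      \<and> length xs - 1 < length (xs @ ys) - 1" by simp
  then show ?thesis unfolding path_edges_def by blast
qed

lemma path_edges_nth: assumes "e \<in> path_edges xs" shows "\<exists>i. Suc i < length xs \<and> e = {xs ! i, xs ! Suc i}"
proof -
  obtain i where "i < length xs - 1" "e = {xs ! i, xs ! Suc i}" using assms by (auto simp: path_edges_def)
  then show ?thesis by (intro exI[of _ i]) auto
qed

lemma distinct_path_edges_neighbours:
  assumes d: "distinct xs" and i: "Suc i < length xs"
  shows "{xs ! i, u} \<in> path_edges xs \<longleftrightarrow> u = xs ! Suc i \<or> (i > 0 \<and> u = xs ! (i - 1))"
proof
  assume "{xs ! i, u} \<in> path_edges xs"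
  then obtain j where j: "Suc j < length xs" "{xs ! i, u} = {xs ! j, xs ! Suc j}"
    using path_edges_nth by blast
  then have "(xs ! i = xs ! j \<and> u = xs ! Suc j) \<or> (xs ! i = xs ! Suc j \<and> u = xs ! j)"
    by (auto simp: doubleton_eq_iff)
  then show "u = xs ! Suc i \<or> (i > 0 \<and> u = xs ! (i - 1))"
  proof
    assume a: "xs ! i = xs ! j \<and> u = xs ! Suc j"
    then have "i = j" using d i j nth_eq_iff_index_eq by (metis Suc_lessD)
    then show ?thesis using a by simp
  next
    assume a: "xs ! i = xs ! Suc j \<and> u = xs ! j"
    then have "i = Suc j" using d i j nth_eq_iff_index_eq by (metis Suc_lessD)
    then show ?thesis using a by simp
  qed
next
  assume "u = xs ! Suc i \<or> (i > 0 \<and> u = xs ! (i - 1))"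
  then show "{xs ! i, u} \<in> path_edges xs"
  proof
    assume "u = xs ! Suc i"
    then show ?thesis using i unfolding path_edges_def by auto
  next
    assume a: "i > 0 \<and> u = xs ! (i - 1)"
    then have "{xs ! i, u} = {xs ! (i - 1), xs ! Suc (i - 1)}" by (auto simp: insert_commute)
    moreover have "i - 1 < length xs - 1" using a i by simp
    ultimately show ?thesis unfolding path_edges_def by blast
  qed
qed

section \<open>Shortest-path distances in a weighted graph\<close>

locale weighted_graph =
  fixes N :: "'v set" and E :: "'v set set" and L :: "'v set \<Rightarrow> real"
  assumes graph: "simple_graph N E" and conn: "connected_graph N E"
    and Lpos: "\<forall>e\<in>E. L e > 0"

context weighted_graph
begin

lemma finN: "finite N" using graph by (simp add: simple_graph_def)

lemma edge_ends: assumes "{a,b} \<in> E" shows "a \<noteq> b" "a \<in> N" "b \<in> N"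
proof -
  obtain u v where "u \<noteq> v" "u \<in> N" "v \<in> N" "{a,b} = {u,v}"
    using graph assms unfolding simple_graph_def by blast
  then show "a \<noteq> b" "a \<in> N" "b \<in> N" by (auto simp: doubleton_eq_iff)
qed

lemma edge_in_E: "e \<in> E \<Longrightarrow> \<exists>a b. e = {a,b} \<and> a \<noteq> b \<and> a \<in> N \<and> b \<in> N"
  using graph unfolding simple_graph_def by blast

lemma finE: "finite E"
proof -
  have "E \<subseteq> Pow N" using edge_in_E by blast
  then show ?thesis using finN by (meson finite_Pow_iff finite_subset)
qed

lemma rwalk_set: "rwalk E xs \<Longrightarrow> length xs \<ge> 2 \<Longrightarrow> set xs \<subseteq> N"
proof (induction xs rule: induct_list012)
  case (3 a b xs)
  then show ?case
  proof (cases xs)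
    case Nil then show ?thesis using 3 edge_ends by auto
  next
    case (Cons c ys) then show ?thesis using 3 edge_ends by auto
  qed
qed auto

lemma spath_set: "spath E v w xs \<Longrightarrow> v \<in> N \<Longrightarrow> set xs \<subseteq> N"
proof -
  assume s: "spath E v w xs" and v: "v \<in> N"
  show ?thesis
  proof (cases "length xs \<ge> 2")
    case True then show ?thesis using s rwalk_set by (auto simp: spath_def walk_rwalk)
  next
    case False
    then obtain a where "xs = [a]" using s
      by (cases xs) (auto simp: spath_def walk_def, metis Suc_1 Suc_le_eq length_greater_0_conv neq_Nil_conv not_less_eq_eq)
    then show ?thesis using s v by (auto simp: spath_def)
  qed
qed

text \<open>There are finitely many paths between two vertices, so the shortest-path distance is a
  minimum and is attained.\<close>
lemma finite_spaths: assumes v: "v \<in> N" shows "finite {xs. spath E v w xs}"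
proof (rule finite_subset[OF _ finite_subset_distinct[OF finN]])
  show "{xs. spath E v w xs} \<subseteq> {xs. set xs \<subseteq> N \<and> distinct xs}"
  proof
    fix xs assume "xs \<in> {xs. spath E v w xs}"
    then have s: "spath E v w xs" by simp
    then have "set xs \<subseteq> N" using spath_set v by blast
    moreover have "distinct xs" using s by (simp add: spath_def)
    ultimately show "xs \<in> {xs. set xs \<subseteq> N \<and> distinct xs}" by simp
  qed
qed

lemma ex_spath: "v \<in> N \<Longrightarrow> w \<in> N \<Longrightarrow> \<exists>xs. spath E v w xs"
  using conn by (auto simp: connected_graph_def)

lemma spath_len_nonneg: "spath E v w xs \<Longrightarrow> rlen L xs \<ge> 0"
  using rlen_nonneg Lpos by (auto simp: spath_def walk_rwalk)

lemma sdist_le: "v \<in> N \<Longrightarrow> spath E v w xs \<Longrightarrow> sdist E L v w \<le> rlen L xs"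
  unfolding sdist_def path_len_rlen[abs_def]
  by (rule cInf_lower) (auto intro!: bdd_below_finite finite_spaths)

lemma sdist_attained: assumes "v \<in> N" "w \<in> N"
  shows "\<exists>xs. spath E v w xs \<and> rlen L xs = sdist E L v w"
proof -
  let ?S = "rlen L ` {xs. spath E v w xs}"
  have "finite ?S" "?S \<noteq> {}" using finite_spaths ex_spath assms by auto
  then have "Inf ?S \<in> ?S" using cInf_eq_Min Min_in by metis
  then show ?thesis unfolding sdist_def path_len_rlen[abs_def] by auto
qed

lemma sdist_nonneg: "v \<in> N \<Longrightarrow> w \<in> N \<Longrightarrow> sdist E L v w \<ge> 0"
  using sdist_attained spath_len_nonneg by metis

lemma sdist_sym: assumes "v \<in> N" "w \<in> N" shows "sdist E L v w = sdist E L w v"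
proof -
  have "sdist E L v w \<le> sdist E L w v" if vN: "v \<in> N" and wN: "w \<in> N" for v w
  proof -
    obtain xs where "spath E w v xs" "rlen L xs = sdist E L w v" using sdist_attained[of w v] vN wN by metis
    then show ?thesis using sdist_le[OF vN spath_rev] rlen_rev by metis
  qed
  then show ?thesis using assms by (meson antisym)
qed

lemma sdist_self: "v \<in> N \<Longrightarrow> sdist E L v v = 0"
proof -
  assume v: "v \<in> N"
  have "spath E v v [v]" by (simp add: spath_def walk_def)
  then have "sdist E L v v \<le> 0" using sdist_le[OF v] by force
  then show ?thesis using sdist_nonneg v by force
qed

text \<open>Triangle inequality along an edge: a shortest path from b, preceded by the edge {a,b}, is a
  path from a once a possible repetition of a is cut off.\<close>
lemma sdist_edge_triangle: assumes e: "{a,b} \<in> E" and z: "z \<in> N"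
  shows "sdist E L a z \<le> L {a,b} + sdist E L b z"
proof -
  have a: "a \<in> N" and b: "b \<in> N" and ab: "a \<noteq> b" using edge_ends e by auto
  obtain xs where xs: "spath E b z xs" "rlen L xs = sdist E L b z"
    using sdist_attained b z by metis
  show ?thesis
  proof (cases "a \<in> set xs")
    case True
    then obtain k where k: "k < length xs" "xs ! k = a" by (meson in_set_conv_nth)
    have wx: "rwalk E xs" using xs by (auto simp: spath_def walk_rwalk)
    have "spath E a z (drop k xs)"
      using xs k rwalk_drop[OF wx k(1)] by (auto simp: spath_def walk_rwalk hd_drop_conv_nth)
    then have "sdist E L a z \<le> rlen L (drop k xs)" using sdist_le a by blast
    also have "\<dots> \<le> rlen L xs" using rlen_drop_le[OF wx Lpos k(1)] .
    finally show ?thesis using xs Lpos e by (smt (verit))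
  next
    case False
    have xne: "xs \<noteq> []" and hx: "hd xs = b" using xs by (auto simp: spath_def walk_def)
    then obtain ys where ys: "xs = b # ys" by (cases xs) auto
    have "spath E a z (a # xs)"
      using xs False e ys by (auto simp: spath_def walk_rwalk)
    then have "sdist E L a z \<le> rlen L (a # xs)" using sdist_le a by blast
    also have "\<dots> = L {a,b} + rlen L xs" using ys by simp
    finally show ?thesis using xs by simp
  qed
qed

lemma sdist_walk_bound: "rwalk E xs \<Longrightarrow> z \<in> N \<Longrightarrow> hd xs \<in> N \<Longrightarrow>
    sdist E L (hd xs) z \<le> rlen L xs + sdist E L (last xs) z"
proof (induction xs rule: induct_list012)
  case (3 a b xs)
  have "sdist E L a z \<le> L {a,b} + sdist E L b z" using sdist_edge_triangle 3 by auto
  moreover have "sdist E L b z \<le> rlen L (b#xs) + sdist E L (last (b#xs)) z"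
    using 3 edge_ends by auto
  ultimately show ?case by simp
qed auto

text \<open>The neighbours of a vertex and the set of arcs, i.e. the edges with both orientations. Sums
  over arcs turn edge sums into vertex sums.\<close>
definition "nbr w = {u \<in> N. {w,u} \<in> E}"

definition "arcs = Sigma N nbr"

lemma fin_nbr: "finite (nbr w)" using finN by (simp add: nbr_def)

lemma fin_arcs: "finite arcs" using finN fin_nbr by (simp add: arcs_def)

lemma arcs_iff: "(w,u) \<in> arcs \<longleftrightarrow> {w,u} \<in> E"
  using edge_ends by (auto simp: arcs_def nbr_def)

lemma arcs_swap: "(w,u) \<in> arcs \<Longrightarrow> (u,w) \<in> arcs"
  by (simp add: arcs_iff insert_commute)

lemma sum_arcs_swap: "(\<Sum>(w,u)\<in>arcs. g w u) = (\<Sum>(w,u)\<in>arcs. g u w)"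
  by (rule sum.reindex_bij_witness[where i = "\<lambda>(a,b). (b,a)" and j = "\<lambda>(a,b). (b,a)"])
     (auto intro: arcs_swap)

lemma sum_arcs_Sigma: "(\<Sum>(w,u)\<in>arcs. g w u) = (\<Sum>w\<in>N. \<Sum>u\<in>nbr w. g w u)"
  unfolding arcs_def by (rule sum.Sigma[symmetric]) (auto simp: finN fin_nbr)

text \<open>Each edge carries exactly two arcs, so an edge sum is half the corresponding arc sum.\<close>
lemma edge_arc_sum: "(\<Sum>e\<in>E. (h e::real)) = (\<Sum>(w,u)\<in>arcs. h {w,u}) / 2"
proof -
  have img: "(\<lambda>(w,u). {w,u}) ` arcs = E"
  proof
    show "(\<lambda>(w,u). {w,u}) ` arcs \<subseteq> E" using arcs_iff by auto
    show "E \<subseteq> (\<lambda>(w,u). {w,u}) ` arcs"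
    proof
      fix e assume "e \<in> E"
      then obtain a b where "e = {a,b}" "{a,b} \<in> E" using edge_in_E by blast
      then show "e \<in> (\<lambda>(w,u). {w,u}) ` arcs" using arcs_iff by (auto intro!: image_eqI[of _ _ "(a,b)"])
    qed
  qed
  have fib: "(\<Sum>x\<in>{x \<in> arcs. (\<lambda>(w,u). {w,u}) x = e}. (\<lambda>(w,u). h {w,u}) x) = 2 * h e" if e: "e \<in> E" for e
  proof -
    obtain a b where ab: "e = {a,b}" "a \<noteq> b" using edge_in_E e by blast
    have "{x \<in> arcs. (\<lambda>(w,u). {w,u}) x = e} = {(a,b),(b,a)}"
      using ab e arcs_iff by (auto simp: doubleton_eq_iff insert_commute)
    then show ?thesis using ab by (simp add: insert_commute)
  qed
  have "(\<Sum>(w,u)\<in>arcs. h {w,u}) = (\<Sum>e\<in>(\<lambda>(w,u). {w,u}) ` arcs. \<Sum>x\<in>{x \<in> arcs. (\<lambda>(w,u). {w,u}) x = e}. (\<lambda>(w,u). h {w,u}) x)"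
    by (rule sum.image_gen[OF fin_arcs])
  also have "\<dots> = (\<Sum>e\<in>E. 2 * h e)" unfolding img by (rule sum.cong) (auto simp: fib)
  finally show ?thesis by (simp add: sum_distrib_left[symmetric])
qed

end

section \<open>Source, sink, tight edges and shortest paths\<close>

text \<open>The locale st_network adds distinct source and sink. An edge lies on a shortest source-sink
  path iff it is tight and its vertices have distance sum Lstar.\<close>

locale st_network = weighted_graph +
  fixes s0 s1
  assumes s0N: "s0 \<in> N" and s1N: "s1 \<in> N" and s01: "s0 \<noteq> s1"

context st_network
begin

definition "dsink v = sdist E L v s1"

definition "dsrc v = sdist E L v s0"

definition "Lstar = sdist E L s0 s1"

definition "tight a b \<longleftrightarrow> {a,b} \<in> E \<and> dsink a - dsink b = L {a,b} \<and> dsrc b - dsrc a = L {a,b}"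

lemma dsink_s1: "dsink s1 = 0" using sdist_self s1N by (simp add: dsink_def)

lemma dsrc_s0: "dsrc s0 = 0" using sdist_self s0N by (simp add: dsrc_def)

lemma dsink_s0: "dsink s0 = Lstar" by (simp add: dsink_def Lstar_def)

lemma dsrc_s1: "dsrc s1 = Lstar" using sdist_sym s0N s1N by (simp add: dsrc_def Lstar_def)

lemma dsink_lip: "{a,b} \<in> E \<Longrightarrow> \<bar>dsink a - dsink b\<bar> \<le> L {a,b}"
  using sdist_edge_triangle[of a b s1] sdist_edge_triangle[of b a s1] s1N by (auto simp: dsink_def insert_commute)

lemma dsrc_lip: "{a,b} \<in> E \<Longrightarrow> \<bar>dsrc a - dsrc b\<bar> \<le> L {a,b}"
  using sdist_edge_triangle[of a b s0] sdist_edge_triangle[of b a s0] s0N by (auto simp: dsrc_def insert_commute)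

text \<open>Every vertex satisfies dsrc v + dsink v \<ge> Lstar, with equality exactly on the vertices
  of shortest paths.\<close>
lemma dist_sum_ge: assumes v: "v \<in> N" shows "dsrc v + dsink v \<ge> Lstar"
proof -
  obtain xs where xs: "spath E s0 v xs" "rlen L xs = sdist E L s0 v"
    using sdist_attained s0N v by metis
  have "sdist E L (hd xs) s1 \<le> rlen L xs + sdist E L (last xs) s1"
    using sdist_walk_bound[of xs s1] xs s0N s1N by (auto simp: spath_def walk_rwalk)
  then show ?thesis using xs sdist_sym[OF s0N v] by (auto simp: spath_def dsink_def dsrc_def Lstar_def)
qed

lemma shortest_path_edge_tight: assumes sp: "shortest_path E L s0 s1 xs" and i: "Suc i < length xs"
  shows "tight (xs ! i) (xs ! Suc i) \<and> dsrc (xs ! i) + dsink (xs ! i) = Lstar"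
proof -
  define a b where "a = xs ! i" and "b = xs ! Suc i"
  define P1 P2 where "P1 = take (Suc i) xs" and "P2 = drop (Suc i) xs"
  have xs: "xs = P1 @ P2" by (simp add: P1_def P2_def)
  have P1ne: "P1 \<noteq> []" and P2ne: "P2 \<noteq> []" using i by (auto simp: P1_def P2_def)
  have lP1: "last P1 = a" using i by (simp add: P1_def a_def take_Suc_conv_app_nth)
  have hP2: "hd P2 = b" using i by (simp add: P2_def b_def hd_drop_conv_nth)
  have wxs: "rwalk E xs" and hx: "hd xs = s0" and lx: "last xs = s1" and pl: "rlen L xs = Lstar"
    using sp by (auto simp: shortest_path_def spath_def walk_rwalk path_len_rlen Lstar_def)
  have w12: "rwalk E P1" "rwalk E P2" "{a,b} \<in> E" using rwalk_append[OF P1ne P2ne] wxs xs lP1 hP2 by auto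
  have hP1: "hd P1 = s0" using hx xs P1ne by simp
  have lP2: "last P2 = s1" using lx xs P2ne by simp
  have aN: "a \<in> N" and bN: "b \<in> N" using edge_ends w12(3) by auto
  have "sdist E L (hd (rev P1)) s0 \<le> rlen L (rev P1) + sdist E L (last (rev P1)) s0"
    using sdist_walk_bound[of "rev P1" s0] w12 rwalk_rev s0N aN P1ne lP1 by (auto simp: hd_rev)
  then have b1: "dsrc a \<le> rlen L P1" using lP1 hP1 P1ne dsrc_s0 by (simp add: hd_rev last_rev rlen_rev dsrc_def)
  have "sdist E L (hd P2) s1 \<le> rlen L P2 + sdist E L (last P2) s1"
    using sdist_walk_bound[of P2 s1] w12 s1N bN hP2 by auto
  then have b2: "dsink b \<le> rlen L P2" using hP2 lP2 dsink_s1 by (simp add: dsink_def)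
  have tot: "Lstar = rlen L P1 + L {a,b} + rlen L P2" using pl xs rlen_append[OF P1ne P2ne] lP1 hP2 by simp
  have t1: "dsink a \<le> L {a,b} + dsink b" using sdist_edge_triangle[OF w12(3) s1N] by (simp add: dsink_def)
  have t2: "dsrc b \<le> L {a,b} + dsrc a" using sdist_edge_triangle[of b a s0] w12(3) s0N by (simp add: dsrc_def insert_commute)
  have h1: "Lstar \<le> dsrc a + dsink a" using dist_sum_ge aN by simp
  have h2: "Lstar \<le> dsrc b + dsink b" using dist_sum_ge bN by simp
  have "tight a b" using w12(3) b1 b2 tot t1 t2 h1 h2 by (simp add: tight_def)
  moreover have "dsrc a + dsink a = Lstar" using b1 b2 tot t1 h1 by linarith
  ultimately show ?thesis using a_def b_def by blast
qed

lemma E0_tight_edge: assumes e: "e \<in> E0 E L s0 s1"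
  shows "\<exists>a b. e = {a,b} \<and> tight a b \<and> dsrc a + dsink a = Lstar"
proof -
  obtain xs where sp: "shortest_path E L s0 s1 xs" and ep: "e \<in> path_edges xs"
    using e by (auto simp: E0_def)
  obtain i where i: "Suc i < length xs" "e = {xs ! i, xs ! Suc i}" using path_edges_nth[OF ep] by blast
  then show ?thesis using shortest_path_edge_tight[OF sp i(1)] by blast
qed

text \<open>A walk to the sink whose length equals the distance of its start to the sink has no repeated
  vertex, since cutting out a cycle would make it shorter.\<close>
lemma tight_walk_distinct: assumes w: "rwalk E W" and hW: "hd W \<in> N" and lW: "last W = s1"
  and pl: "rlen L W = dsink (hd W)"
  shows "distinct W"
proof (rule ccontr)
  assume "\<not> distinct W"
  then obtain xs ys zs y where W: "W = xs @ [y] @ ys @ [y] @ zs" using not_distinct_decomp by blast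
  let ?W' = "xs @ y # zs"
  have W2: "W = xs @ y # (ys @ y # zs)" using W by simp
  have sp1: "rlen L W = rlen L (xs @ [y]) + rlen L (y # (ys @ y # zs))"
    unfolding W2 by (rule rlen_split)
  have sp2: "rlen L ((y # ys) @ y # zs) = rlen L ((y # ys) @ [y]) + rlen L (y # zs)"
    by (rule rlen_split)
  have pW: "rlen L W = rlen L (xs @ [y]) + rlen L (y # ys @ [y]) + rlen L (y # zs)"
    using sp1 sp2 by simp
  have sw1: "rwalk E W = (rwalk E (xs @ [y]) \<and> rwalk E (y # (ys @ y # zs)))"
    unfolding W2 by (rule rwalk_split)
  have sw2: "rwalk E ((y # ys) @ y # zs) = (rwalk E ((y # ys) @ [y]) \<and> rwalk E (y # zs))"
    by (rule rwalk_split)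
  have wW: "rwalk E (xs @ [y])" "rwalk E (y # ys @ [y])" "rwalk E (y # zs)"
    using w sw1 sw2 by simp_all
  have pos: "rlen L (y # ys @ [y]) > 0" using rlen_pos[OF wW(2) Lpos] by simp
  have wW': "rwalk E ?W'" using wW rwalk_split[of E xs y zs] by simp
  have pW': "rlen L ?W' = rlen L (xs @ [y]) + rlen L (y # zs)" by (rule rlen_split)
  have hd': "hd ?W' = hd W" using W by (cases xs) auto
  have last': "last ?W' = last W" using W by (cases zs) auto
  have "sdist E L (hd ?W') s1 \<le> rlen L ?W' + sdist E L (last ?W') s1"
    using sdist_walk_bound[OF wW' s1N] hd' hW by simp
  then have "dsink (hd W) \<le> rlen L ?W'" using hd' last' lW dsink_s1 by (simp add: dsink_def)
  then show False using pW pW' pos pl by linarith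
qed

text \<open>Conversely, a tight edge leaving a vertex of a shortest path lies on a shortest path: join a
  shortest path from the source with one to the sink.\<close>
lemma tight_edge_in_E0: assumes T: "tight a b" and h: "dsrc a + dsink a = Lstar" shows "{a,b} \<in> E0 E L s0 s1"
proof -
  have eE: "{a,b} \<in> E" using T by (simp add: tight_def)
  have aN: "a \<in> N" and bN: "b \<in> N" using edge_ends eE by auto
  obtain P1 where P1: "spath E s0 a P1" "rlen L P1 = sdist E L s0 a"
    using sdist_attained s0N aN by metis
  obtain P2 where P2: "spath E b s1 P2" "rlen L P2 = sdist E L b s1"
    using sdist_attained s1N bN by metis
  have ne: "P1 \<noteq> []" "P2 \<noteq> []" using P1 P2 by (auto simp: spath_def walk_def)
  have l1: "last P1 = a" and h2: "hd P2 = b" and h1: "hd P1 = s0" and l2: "last P2 = s1"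
    using P1 P2 by (auto simp: spath_def)
  let ?W = "P1 @ P2"
  have wW: "rwalk E ?W" using rwalk_append[OF ne] P1 P2 eE l1 h2 by (auto simp: spath_def walk_rwalk)
  have pW: "rlen L ?W = Lstar"
    using rlen_append[OF ne, of L] P1 P2 l1 h2 T h sdist_sym[OF s0N aN]
    by (simp add: tight_def dsink_def dsrc_def)
  have hW: "hd ?W = s0" and lW: "last ?W = s1" using ne h1 l2 by auto
  have "distinct ?W" using tight_walk_distinct[OF wW] hW lW pW s0N dsink_s0 by simp
  then have "shortest_path E L s0 s1 ?W"
    using wW hW lW pW by (simp add: shortest_path_def spath_def walk_rwalk path_len_rlen Lstar_def)
  moreover have "{a,b} \<in> path_edges ?W" using path_edges_append[OF ne] l1 h2 by simp
  ultimately show ?thesis using eE by (auto simp: E0_def)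
qed

lemma tight_asym: "tight a b \<Longrightarrow> \<not> tight b a"
  using Lpos by (auto simp: tight_def insert_commute)

lemma tight_dist_sum: "tight a b \<Longrightarrow> dsrc a + dsink a = dsrc b + dsink b"
  by (auto simp: tight_def)

definition "dsum v = dsrc v + dsink v"

lemma dsum_s0: "dsum s0 = Lstar" by (simp add: dsum_def dsrc_s0 dsink_s0)

lemma dsum_s1: "dsum s1 = Lstar" by (simp add: dsum_def dsrc_s1 dsink_s1)

lemma dsum_ge: "v \<in> N \<Longrightarrow> dsum v \<ge> Lstar" using dist_sum_ge by (simp add: dsum_def)

definition "tsign w u = (if tight w u then 1 else if tight u w then -1 else (0::real))"

lemma tsign_anti: "tsign u w = - tsign w u"
  using tight_asym by (auto simp: tsign_def)

lemma E0_sub: "E0 E L s0 s1 \<subseteq> E" by (auto simp: E0_def)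

lemma E0_dsum: assumes "{w,u} \<in> E0 E L s0 s1"
  shows "dsum w = Lstar \<and> dsum u = Lstar \<and> (tight w u \<or> tight u w)"
proof -
  obtain a b where ab: "{w,u} = {a,b}" "tight a b" "dsrc a + dsink a = Lstar" using E0_tight_edge[OF assms] by blast
  have "dsum b = dsum a" using tight_dist_sum[OF ab(2)] by (simp add: dsum_def)
  then show ?thesis using ab by (auto simp: doubleton_eq_iff dsum_def)
qed

lemma ex_shortest: "\<exists>P. shortest_path E L s0 s1 P"
  using sdist_attained[OF s0N s1N]
  by (auto simp: shortest_path_def path_len_rlen)

lemma shortest_path_facts: assumes "shortest_path E L s0 s1 P"
  shows "walk E P" "distinct P" "hd P = s0" "last P = s1" "path_len L P = Lstar"
    "(\<Sum>i<length P - 1. L {P ! i, P ! Suc i}) = Lstar" "P \<noteq> []"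
  using assms by (auto simp: shortest_path_def spath_def Lstar_def path_len_def walk_def)

lemma shortest_path_length: assumes "shortest_path E L s0 s1 P" shows "length P \<ge> 2"
proof -
  have "P \<noteq> []" "hd P = s0" "last P = s1" using shortest_path_facts[OF assms] by auto
  then obtain x xs where Px: "P = x # xs" by (cases P) auto
  show ?thesis
  proof (cases xs)
    case Nil then show ?thesis using Px \<open>hd P = s0\<close> \<open>last P = s1\<close> s01 by simp
  next
    case (Cons y ys) then show ?thesis using Px by simp
  qed
qed

lemma shortest_path_edge: assumes "shortest_path E L s0 s1 P" "i < length P - 1"
  shows "{P ! i, P ! Suc i} \<in> E"
  using shortest_path_facts(1)[OF assms(1)] assms(2) by (simp add: walk_def)

lemma shortest_path_edges_inj: assumes "shortest_path E L s0 s1 P"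
  shows "inj_on (\<lambda>i. {P ! i, P ! Suc i}) {..<length P - 1}"
proof (rule inj_onI)
  fix i j assume i: "i \<in> {..<length P - 1}" and j: "j \<in> {..<length P - 1}"
    and eq: "{P ! i, P ! Suc i} = {P ! j, P ! Suc j}"
  have d: "distinct P" using shortest_path_facts[OF assms] by simp
  have lt: "i < length P" "Suc i < length P" "j < length P" "Suc j < length P" using i j by auto
  from eq have "(P ! i = P ! j \<and> P ! Suc i = P ! Suc j) \<or> (P ! i = P ! Suc j \<and> P ! Suc i = P ! j)"
    by (auto simp: doubleton_eq_iff)
  then show "i = j"
  proof
    assume "P ! i = P ! j \<and> P ! Suc i = P ! Suc j"
    then show "i = j" using d lt nth_eq_iff_index_eq by blast
  next
    assume "P ! i = P ! Suc j \<and> P ! Suc i = P ! j"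
    then have "i = Suc j" "Suc i = j" using d lt nth_eq_iff_index_eq by blast+
    then show "i = j" by simp
  qed
qed

lemma Lstar_pos: "Lstar > 0"
proof -
  obtain P where P: "shortest_path E L s0 s1 P" using ex_shortest by blast
  have "walk E P" "path_len L P = Lstar" using shortest_path_facts[OF P] by auto
  moreover have "length P \<ge> 2" using shortest_path_length[OF P] .
  ultimately have "rlen L P > 0" using rlen_pos[of E P L] Lpos by (simp add: walk_rwalk)
  then show ?thesis using \<open>path_len L P = Lstar\<close> by (simp add: path_len_rlen)
qed

lemma E_ne: "E \<noteq> {}"
proof -
  obtain P where P: "shortest_path E L s0 s1 P" using ex_shortest by blast
  have "{P ! 0, P ! Suc 0} \<in> E" using shortest_path_edge[OF P, of 0] shortest_path_length[OF P] by simp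
  then show ?thesis by blast
qed

lemma E0_unique_path:
  assumes sp: "shortest_path E L s0 s1 xs" and uq: "\<forall>ys. shortest_path E L s0 s1 ys \<longrightarrow> ys = xs"
  shows "E0 E L s0 s1 = path_edges xs"
proof
  show "E0 E L s0 s1 \<subseteq> path_edges xs" using uq by (auto simp: E0_def)
  show "path_edges xs \<subseteq> E0 E L s0 s1"
  proof
    fix e assume e: "e \<in> path_edges xs"
    then obtain i where "Suc i < length xs" "e = {xs ! i, xs ! Suc i}" using path_edges_nth by blast
    then have "e \<in> E" using shortest_path_edge[OF sp, of i] by simp
    then show "e \<in> E0 E L s0 s1" using sp e by (auto simp: E0_def)
  qed
qed

lemma shortest_path_dsink_decreasing:
  assumes sp: "shortest_path E L s0 s1 xs" and i: "Suc i < length xs"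
  shows "dsink (xs ! Suc i) < dsink (xs ! i)"
  using shortest_path_edge_tight[OF sp i] Lpos by (auto simp: tight_def)

lemma sum_bvec: "(\<Sum>w\<in>N. \<phi> w * bvec s0 s1 w) = \<phi> s0 - \<phi> s1"
proof -
  have "(\<Sum>w\<in>N. \<phi> w * bvec s0 s1 w) = (\<Sum>w\<in>N. (if w = s0 then \<phi> w else 0) - (if w = s1 then \<phi> w else 0))"
    by (rule sum.cong) (auto simp: bvec_def s01)
  also have "\<dots> = \<phi> s0 - \<phi> s1" by (simp add: sum_subtractf finN s0N s1N)
  finally show ?thesis .
qed

lemma flow_identity:
  assumes anti: "\<And>w u. (w,u) \<in> arcs \<Longrightarrow> G u w = - G w u"
    and kirchhoff: "\<And>w. w \<in> N \<Longrightarrow> (\<Sum>u\<in>nbr w. G w u) = bvec s0 s1 w"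
  shows "(\<Sum>(w,u)\<in>arcs. (\<phi> w - \<phi> u) * G w u) = 2 * (\<phi> s0 - \<phi> s1)"
proof -
  have s1: "(\<Sum>(w,u)\<in>arcs. \<phi> w * G w u) = \<phi> s0 - \<phi> s1"
  proof -
    have "(\<Sum>(w,u)\<in>arcs. \<phi> w * G w u) = (\<Sum>w\<in>N. \<Sum>u\<in>nbr w. \<phi> w * G w u)" by (rule sum_arcs_Sigma)
    also have "\<dots> = (\<Sum>w\<in>N. \<phi> w * bvec s0 s1 w)" by (rule sum.cong) (auto simp: sum_distrib_left[symmetric] kirchhoff)
    finally show ?thesis using sum_bvec by simp
  qed
  have s2: "(\<Sum>(w,u)\<in>arcs. \<phi> u * G w u) = - (\<Sum>(w,u)\<in>arcs. \<phi> w * G w u)"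
  proof -
    have "(\<Sum>(w,u)\<in>arcs. \<phi> u * G w u) = (\<Sum>(w,u)\<in>arcs. \<phi> w * G u w)" by (rule sum_arcs_swap)
    also have "\<dots> = (\<Sum>(w,u)\<in>arcs. - (\<phi> w * G w u))" by (rule sum.cong) (auto simp: anti)
    also have "\<dots> = - (\<Sum>(w,u)\<in>arcs. \<phi> w * G w u)" by (simp add: sum_negf[symmetric] case_prod_beta)
    finally show ?thesis .
  qed
  have "(\<Sum>(w,u)\<in>arcs. (\<phi> w - \<phi> u) * G w u) = (\<Sum>(w,u)\<in>arcs. \<phi> w * G w u) - (\<Sum>(w,u)\<in>arcs. \<phi> u * G w u)"
    by (simp add: sum_subtractf[symmetric] case_prod_beta left_diff_distrib)
  then show ?thesis using s1 s2 by simp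
qed

text \<open>The slack of an arc measures how far it is from being tight; gap is the least positive
  slack, a positive constant of the network.\<close>
definition "slack w u = 2 * L {w,u} - (dsink w - dsink u) - (dsrc u - dsrc w)"

lemma slack_nonneg: "(w,u) \<in> arcs \<Longrightarrow> slack w u \<ge> 0"
  using dsink_lip[of w u] dsrc_lip[of w u] arcs_iff by (auto simp: slack_def abs_le_iff insert_commute)

lemma slack_pos: "(w,u) \<in> arcs \<Longrightarrow> \<not> tight w u \<Longrightarrow> slack w u > 0"
  using dsink_lip[of w u] dsrc_lip[of w u] arcs_iff by (auto simp: slack_def abs_le_iff tight_def insert_commute)

lemma slack_le: "(w,u) \<in> arcs \<Longrightarrow> slack w u \<le> 4 * L {w,u}"
  using dsink_lip[of w u] dsrc_lip[of w u] arcs_iff by (auto simp: slack_def abs_le_iff insert_commute)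

definition "gap = Min (insert 1 ((\<lambda>(w,u). slack w u) ` {a \<in> arcs. (\<lambda>(w,u). slack w u) a > 0}))"

lemma gap_pos: "gap > 0"
proof -
  have "finite (insert 1 ((\<lambda>(w,u). slack w u) ` {a \<in> arcs. (\<lambda>(w,u). slack w u) a > 0}))"
    using fin_arcs by auto
  then show ?thesis unfolding gap_def by (subst Min_gr_iff) auto
qed

lemma gap_le: "(w,u) \<in> arcs \<Longrightarrow> slack w u > 0 \<Longrightarrow> gap \<le> slack w u"
  unfolding gap_def using fin_arcs by (intro Min_le) (auto intro!: image_eqI[of _ _ "(w,u)"])

end

section \<open>Characterisation of the optimal flows\<close>

context st_network
begin

text \<open>The cut potential equals the distance to the sink on vertices off all shortest paths and
  vanishes on them; it is the test function in the flow identity below.\<close>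
definition "cut_potential v = (if dsum v > Lstar then dsink v else 0)"

lemma cut_potential_tight:
  assumes "tight w u"
  shows "cut_potential w - cut_potential u = (if dsum w > Lstar then L {w,u} else 0)"
  using assms tight_dist_sum[OF assms] by (auto simp: cut_potential_def tight_def dsum_def)

lemma cut_potential_term_nonneg:
  assumes x: "x {w,u} \<ge> 0" and e: "{w,u} \<in> E"
  shows "(cut_potential w - cut_potential u) * (tsign w u * x {w,u}) \<ge> 0"
proof -
  have Le: "L {w,u} > 0" using Lpos e by blast
  consider "tight w u" | "tight u w" "\<not> tight w u" | "\<not> tight w u" "\<not> tight u w" by blast
  then show ?thesis
  proof cases
    case 1
    then show ?thesis using cut_potential_tight[OF 1] x Le by (simp add: tsign_def)
  next
    case 2
    have "cut_potential w - cut_potential u \<le> 0"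
      using cut_potential_tight[OF 2(1)] Le by (simp add: insert_commute split: if_splits)
    then show ?thesis using 2 x by (simp add: tsign_def mult_nonpos_nonneg)
  next
    case 3
    then show ?thesis by (simp add: tsign_def)
  qed
qed

text \<open>A nonnegative unit flow in the tight orientation carries nothing on tight edges leaving a
  vertex off all shortest paths: pairing it with the cut potential gives
  2 (cut_potential s0 - cut_potential s1) = 0, a sum of nonnegative terms, and the term of such an
  edge is L times its flow.\<close>
lemma tight_flow_off_E0_zero:
  assumes xnn: "\<forall>e\<in>E. x e \<ge> 0"
    and kirchhoff: "\<forall>w\<in>N. (\<Sum>u\<in>nbr w. tsign w u * x {w,u}) = bvec s0 s1 w"
    and T: "tight a b" and h: "dsum a > Lstar"
  shows "x {a,b} = 0"
proof -
  define contrib where "contrib w u = (cut_potential w - cut_potential u) * (tsign w u * x {w,u})" for w u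
  have "(\<Sum>(w,u)\<in>arcs. contrib w u) = 2 * (cut_potential s0 - cut_potential s1)"
    unfolding contrib_def
  proof (rule flow_identity)
    show "tsign u w * x {u,w} = - (tsign w u * x {w,u})" for w u
      by (simp add: tsign_anti[of u w] insert_commute)
    show "(\<Sum>u\<in>nbr w. tsign w u * x {w,u}) = bvec s0 s1 w" if "w \<in> N" for w
      using kirchhoff that by blast
  qed
  then have sum0: "(\<Sum>(w,u)\<in>arcs. contrib w u) = 0"
    by (simp add: cut_potential_def dsum_s0 dsum_s1)
  have nn: "\<And>a. a \<in> arcs \<Longrightarrow> 0 \<le> (\<lambda>(w,u). contrib w u) a"
    using cut_potential_term_nonneg xnn by (auto simp: contrib_def arcs_iff)
  have ab: "(a,b) \<in> arcs" using T arcs_iff by (simp add: tight_def)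
  have "contrib a b = 0"
    using sum_nonneg_eq_0_iff[OF fin_arcs nn] sum0 ab by auto
  moreover have "contrib a b = L {a,b} * x {a,b}"
    using cut_potential_tight[OF T] h T by (simp add: contrib_def tsign_def)
  moreover have "L {a,b} > 0" using Lpos T by (simp add: tight_def)
  ultimately show ?thesis by simp
qed

text \<open>A nonnegative vector satisfying Kirchhoff's law in the tight orientation and vanishing on
  non-tight edges vanishes on every edge outside E0: tight edges outside E0 leave a vertex off
  all shortest paths, so the previous lemma applies.\<close>
lemma vanishes_off_E0:
  assumes xnn: "\<forall>e\<in>E. x e \<ge> 0"
    and x0: "\<forall>a b. {a,b} \<in> E \<longrightarrow> \<not> tight a b \<longrightarrow> \<not> tight b a \<longrightarrow> x {a,b} = 0"
    and kirchhoff: "\<forall>w\<in>N. (\<Sum>u\<in>nbr w. tsign w u * x {w,u}) = bvec s0 s1 w"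
    and e: "e \<in> E" and off: "e \<notin> E0 E L s0 s1"
  shows "x e = 0"
proof -
  obtain a b where ab: "e = {a,b}" using edge_in_E e by blast
  have aN: "a \<in> N" and bN: "b \<in> N" using edge_ends e ab by auto
  consider "tight a b" | "tight b a" | "\<not> tight a b" "\<not> tight b a" by blast
  then show ?thesis
  proof cases
    case 1
    have "dsum a \<noteq> Lstar" using tight_edge_in_E0[OF 1] off ab by (auto simp: dsum_def)
    then have "dsum a > Lstar" using dsum_ge[OF aN] by simp
    then show ?thesis using tight_flow_off_E0_zero[OF xnn kirchhoff 1] ab by simp
  next
    case 2
    have "dsum b \<noteq> Lstar" using tight_edge_in_E0[OF 2] off ab by (auto simp: dsum_def insert_commute)
    then have "dsum b > Lstar" using dsum_ge[OF bN] by simp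
    then show ?thesis using tight_flow_off_E0_zero[OF xnn kirchhoff 2] ab by (simp add: insert_commute)
  next
    case 3
    then show ?thesis using x0 e ab by blast
  qed
qed

lemma tsign_E0_orientation:
  assumes hw: "dsum w = Lstar" and u: "u \<in> nbr w"
  shows "tsign w u = (if {w,u} \<in> E0 E L s0 s1 then (if dsink u < dsink w then 1 else -1) else 0)"
proof (cases "{w,u} \<in> E0 E L s0 s1")
  case True
  then have "tight w u \<or> tight u w" using E0_dsum by blast
  then show ?thesis using True tight_asym Lpos by (auto simp: tight_def tsign_def insert_commute)
next
  case False
  have "\<not> tight w u" using tight_edge_in_E0[of w u] hw False by (auto simp: dsum_def)
  moreover have "\<not> tight u w"
  proof
    assume T2: "tight u w"
    then have "dsum u = Lstar" using tight_dist_sum[OF T2] hw by (simp add: dsum_def)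
    then have "{u,w} \<in> E0 E L s0 s1" using tight_edge_in_E0[OF T2] by (simp add: dsum_def)
    then show False using False by (simp add: insert_commute)
  qed
  ultimately show ?thesis using False by (simp add: tsign_def)
qed

text \<open>Kirchhoff's law in the tight orientation implies the conservation condition in the
  definition of Estar: vertices off all shortest paths have no E0 edges and zero supply, and at
  the others non-E0 edges have tight sign 0 while on E0 edges the two orientations agree.\<close>
lemma kirchhoff_E0:
  assumes kirchhoff: "\<forall>w\<in>N. (\<Sum>u\<in>nbr w. tsign w u * x {w,u}) = bvec s0 s1 w"
    and w: "w \<in> N"
  shows "(\<Sum>u \<in> {u \<in> N. {w, u} \<in> E0 E L s0 s1}.
          (if sdist E L u s1 < sdist E L w s1 then x {w, u} else - x {w, u})) = bvec s0 s1 w"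
proof (cases "dsum w > Lstar")
  case True
  have e: "{u \<in> N. {w, u} \<in> E0 E L s0 s1} = {}" using E0_dsum True by force
  have b: "bvec s0 s1 w = 0" using True dsum_s0 dsum_s1 by (auto simp: bvec_def)
  show ?thesis unfolding e b by simp
next
  case False
  then have hw: "dsum w = Lstar" using dsum_ge[OF w] by simp
  have "(\<Sum>u \<in> {u \<in> N. {w, u} \<in> E0 E L s0 s1}.
          (if sdist E L u s1 < sdist E L w s1 then x {w, u} else - x {w, u}))
      = (\<Sum>u \<in> {u \<in> nbr w. {w, u} \<in> E0 E L s0 s1}. (if dsink u < dsink w then x {w, u} else - x {w, u}))"
    by (rule sum.cong) (use E0_sub in \<open>auto simp: nbr_def dsink_def\<close>)
  also have "\<dots> = (\<Sum>u \<in> nbr w. (if {w,u} \<in> E0 E L s0 s1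
                     then (if dsink u < dsink w then x {w,u} else - x {w,u}) else 0))"
    by (rule sum.inter_filter[OF fin_nbr])
  also have "\<dots> = (\<Sum>u \<in> nbr w. tsign w u * x {w,u})"
    by (rule sum.cong[OF refl]) (simp add: tsign_E0_orientation[OF hw])
  also have "\<dots> = bvec s0 s1 w" using kirchhoff w by blast
  finally show ?thesis .
qed

lemma restrict_E0_in_Estar:
  assumes xnn: "\<forall>e\<in>E. x e \<ge> 0"
    and kirchhoff: "\<forall>w\<in>N. (\<Sum>u\<in>nbr w. tsign w u * x {w,u}) = bvec s0 s1 w"
  shows "(\<lambda>e. if e \<in> E0 E L s0 s1 then x e else 0) \<in> Estar N E L s0 s1"
proof -
  define y where "y e = (if e \<in> E0 E L s0 s1 then x e else 0)" for e
  have "y \<in> Estar N E L s0 s1"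
    unfolding Estar_def
  proof (intro CollectI conjI allI impI ballI)
    fix e show "0 \<le> y e" using xnn E0_sub by (auto simp: y_def)
  next
    fix e assume "e \<notin> E0 E L s0 s1" then show "y e = 0" by (simp add: y_def)
  next
    fix w assume w: "w \<in> N"
    have "(\<Sum>u \<in> {u \<in> N. {w, u} \<in> E0 E L s0 s1}.
          (if sdist E L u s1 < sdist E L w s1 then y {w, u} else - y {w, u}))
        = (\<Sum>u \<in> {u \<in> N. {w, u} \<in> E0 E L s0 s1}.
          (if sdist E L u s1 < sdist E L w s1 then x {w, u} else - x {w, u}))"
      by (rule sum.cong) (simp_all add: y_def)
    then show "(\<Sum>u \<in> {u \<in> N. {w, u} \<in> E0 E L s0 s1}.
          (if sdist E L u s1 < sdist E L w s1 then y {w, u} else - y {w, u})) = bvec s0 s1 w"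
      using kirchhoff_E0[OF kirchhoff w] by simp
  qed
  then show ?thesis by (simp add: y_def[abs_def])
qed

text \<open>A member of Estar whose support E0 is a single shortest path carries value one on every edge
  of it: Kirchhoff's law at the source and at each inner vertex propagates the value along the
  path, which is oriented towards the sink.\<close>
lemma Estar_single_path_value:
  assumes sp: "shortest_path E L s0 s1 xs" and E0eq: "E0 E L s0 s1 = path_edges xs"
    and yE: "y \<in> Estar N E L s0 s1" and i: "Suc i < length xs"
  shows "y {xs ! i, xs ! Suc i} = 1"
proof -
  have ycons: "\<And>w. w \<in> N \<Longrightarrow> (\<Sum>u \<in> {u \<in> N. {w, u} \<in> path_edges xs}.
          (if sdist E L u s1 < sdist E L w s1 then y {w, u} else - y {w, u})) = bvec s0 s1 w"
    using yE E0eq by (auto simp: Estar_def)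
  have d: "distinct xs" and ne: "xs \<noteq> []" using shortest_path_facts[OF sp] by auto
  have len: "length xs \<ge> 2" using shortest_path_length[OF sp] .
  have x0: "xs ! 0 = s0" and xn: "xs ! (length xs - 1) = s1"
    using shortest_path_facts[OF sp] ne by (simp_all add: hd_conv_nth last_conv_nth)
  have xsN: "xs ! i \<in> N" if "i < length xs" for i
    using that shortest_path_facts(1)[OF sp] len rwalk_set by (force simp: walk_rwalk)
  note nbrs = distinct_path_edges_neighbours[OF d]
  note dec = shortest_path_dsink_decreasing[OF sp]
  show ?thesis
    using i
  proof (induction i)
    case 0
    have A: "{u \<in> N. {xs ! 0, u} \<in> path_edges xs} = {xs ! 1}"
      using nbrs[OF 0] xsN[of 1] 0 by auto
    have "(\<Sum>u \<in> {u \<in> N. {xs ! 0, u} \<in> path_edges xs}.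
          (if sdist E L u s1 < sdist E L (xs ! 0) s1 then y {xs ! 0, u} else - y {xs ! 0, u}))
        = bvec s0 s1 (xs ! 0)"
      by (rule ycons[OF xsN]) (use ne in simp)
    then show ?case unfolding A using dec[OF 0] x0 by (simp add: dsink_def bvec_def)
  next
    case (Suc i)
    let ?v = "xs ! Suc i"
    have i1: "Suc (Suc i) < length xs" using Suc.prems .
    have A: "{u \<in> N. {?v, u} \<in> path_edges xs} = {xs ! Suc (Suc i), xs ! i}"
      using nbrs[OF i1] xsN[of "Suc (Suc i)"] xsN[of i] i1 by auto
    have neq: "xs ! Suc (Suc i) \<noteq> xs ! i"
      using nth_eq_iff_index_eq[OF d, of "Suc (Suc i)" i] i1 by simp
    have lt: "dsink (xs ! Suc (Suc i)) < dsink ?v" "\<not> dsink (xs ! i) < dsink ?v"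
      using dec[OF i1] dec[of i] i1 by auto
    have "?v \<noteq> xs ! 0" "?v \<noteq> xs ! (length xs - 1)"
      using nth_eq_iff_index_eq[OF d, of "Suc i" 0] nth_eq_iff_index_eq[OF d, of "Suc i" "length xs - 1"]
        i1 ne by auto
    then have inner: "?v \<noteq> s0" "?v \<noteq> s1" using x0 xn by auto
    have "(\<Sum>u \<in> {u \<in> N. {?v, u} \<in> path_edges xs}.
          (if sdist E L u s1 < sdist E L ?v s1 then y {?v, u} else - y {?v, u})) = bvec s0 s1 ?v"
      by (rule ycons[OF xsN]) (use i1 in simp)
    then have "y {?v, xs ! Suc (Suc i)} = y {?v, xs ! i}"
      unfolding A using neq lt inner by (simp add: dsink_def bvec_def)
    then show ?case using Suc by (simp add: insert_commute)
  qed
qed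

lemma Estar_unique_path:
  assumes sp: "shortest_path E L s0 s1 xs" and uq: "\<forall>ys. shortest_path E L s0 s1 ys \<longrightarrow> ys = xs"
    and yE: "y \<in> Estar N E L s0 s1" and e: "e \<in> E"
  shows "y e = (if e \<in> path_edges xs then 1 else 0)"
proof (cases "e \<in> path_edges xs")
  case True
  then obtain i where "Suc i < length xs" "e = {xs ! i, xs ! Suc i}" using path_edges_nth by blast
  then show ?thesis using Estar_single_path_value[OF sp E0_unique_path[OF sp uq] yE] True by simp
next
  case False
  then show ?thesis using yE E0_unique_path[OF sp uq] by (auto simp: Estar_def)
qed

end

section \<open>A snapshot of the electrical flow\<close>

locale flow_snapshot = st_network +
  fixes D and p
  assumes D_pos: "\<forall>e\<in>E. D e > 0" and pot: "is_potential N E L D s0 s1 p"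

context flow_snapshot
begin

definition "flow w u = (p w - p u) * D {w,u} / L {w,u}"

definition "Q e = current L D p e"

definition "energy = (\<Sum>e\<in>E. L e * (Q e)\<^sup>2 / D e)"

definition "cost = (\<Sum>e\<in>E. L e * \<bar>Q e\<bar>)"

definition "vol = (\<Sum>e\<in>E. L e * D e)"

lemma flow_anti: "flow u w = - flow w u"
proof -
  have c: "{u,w} = {w,u}" by auto
  have "flow u w = (p u - p w) * D {w,u} / L {w,u}" unfolding flow_def c ..
  also have "\<dots> = - ((p w - p u) * D {w,u} / L {w,u})" by (metis minus_diff_eq mult_minus_left minus_divide_left)
  finally show ?thesis by (simp add: flow_def)
qed

lemma p_s1: "p s1 = 0" using pot by (simp add: is_potential_def)

lemma kirchhoff: assumes w: "w \<in> N" shows "(\<Sum>u\<in>nbr w. flow w u) = bvec s0 s1 w"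
proof -
  have "(\<Sum>u\<in>nbr w. flow w u) = (\<Sum>u\<in>{u\<in>N. {u,w}\<in>E}. (p w - p u) * D {u,w} / L {u,w})"
    unfolding nbr_def flow_def by (rule sum.cong) (auto simp: insert_commute)
  also have "\<dots> = bvec s0 s1 w" using pot w unfolding is_potential_def by blast
  finally show ?thesis .
qed

lemma Q_arc: assumes "(w,u) \<in> arcs" shows "\<bar>Q {w,u}\<bar> = \<bar>flow w u\<bar>" "(Q {w,u})\<^sup>2 = (flow w u)\<^sup>2"
proof -
  have wu: "w \<noteq> u" using assms arcs_iff edge_ends by blast
  have ex: "\<exists>uv. {w,u} = {fst uv, snd uv} \<and> fst uv \<noteq> snd uv" using wu by (intro exI[of _ "(w,u)"]) auto
  define xy where "xy = orient {w,u}"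
  have "{w,u} = {fst xy, snd xy} \<and> fst xy \<noteq> snd xy"
    unfolding xy_def orient_def by (rule someI_ex[OF ex])
  then have xy: "xy = (w,u) \<or> xy = (u,w)" by (cases xy) (auto simp: doubleton_eq_iff)
  have Qd: "Q {w,u} = D {w,u} * (p (fst xy) - p (snd xy)) / L {w,u}"
    by (simp add: Q_def current_def xy_def)
  have c: "{u,w} = {w,u}" by auto
  have "Q {w,u} = flow w u \<or> Q {w,u} = flow u w"
  proof (cases "xy = (w,u)")
    case True then show ?thesis using Qd by (simp add: flow_def mult.commute)
  next
    case False then have "xy = (u,w)" using xy by blast
    then show ?thesis using Qd by (simp add: flow_def c mult.commute)
  qed
  then show "\<bar>Q {w,u}\<bar> = \<bar>flow w u\<bar>" "(Q {w,u})\<^sup>2 = (flow w u)\<^sup>2" using flow_anti[of w u] by auto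
qed

lemma flow_potential_identity: "(\<Sum>(w,u)\<in>arcs. (\<phi> w - \<phi> u) * flow w u) = 2 * (\<phi> s0 - \<phi> s1)"
  by (rule flow_identity, rule flow_anti, rule kirchhoff, assumption)

lemma arc_pos: "(w,u) \<in> arcs \<Longrightarrow> {w,u} \<in> E \<and> D {w,u} > 0 \<and> L {w,u} > 0"
  using arcs_iff D_pos Lpos by auto

lemma energy_eq_potential: "energy = p s0"
proof -
  have "energy = (\<Sum>(w,u)\<in>arcs. L {w,u} * (Q {w,u})\<^sup>2 / D {w,u}) / 2"
    unfolding energy_def by (rule edge_arc_sum)
  also have "(\<Sum>(w,u)\<in>arcs. L {w,u} * (Q {w,u})\<^sup>2 / D {w,u}) = (\<Sum>(w,u)\<in>arcs. (p w - p u) * flow w u)"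
  proof (rule sum.cong[OF refl], clarify)
    fix w u assume a: "(w,u) \<in> arcs"
    then have "L {w,u} > 0" "D {w,u} > 0" using arc_pos by auto
    then show "L {w,u} * (Q {w,u})\<^sup>2 / D {w,u} = (p w - p u) * flow w u"
      using Q_arc(2)[OF a] by (simp add: flow_def power2_eq_square field_simps)
  qed
  also have "\<dots> = 2 * (p s0 - p s1)" by (rule flow_potential_identity)
  finally show ?thesis using p_s1 by simp
qed

lemma cost_arcs: "cost = (\<Sum>(w,u)\<in>arcs. L {w,u} * \<bar>flow w u\<bar>) / 2"
proof -
  have "cost = (\<Sum>(w,u)\<in>arcs. L {w,u} * \<bar>Q {w,u}\<bar>) / 2" unfolding cost_def by (rule edge_arc_sum)
  also have "(\<Sum>(w,u)\<in>arcs. L {w,u} * \<bar>Q {w,u}\<bar>) = (\<Sum>(w,u)\<in>arcs. L {w,u} * \<bar>flow w u\<bar>)"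
    by (rule sum.cong) (auto simp: Q_arc)
  finally show ?thesis .
qed

lemma dsink_flow: "(\<Sum>(w,u)\<in>arcs. (dsink w - dsink u) * flow w u) = 2 * Lstar"
  using flow_potential_identity[of dsink] dsink_s0 dsink_s1 by simp

lemma dsrc_flow: "(\<Sum>(w,u)\<in>arcs. (dsrc u - dsrc w) * flow w u) = 2 * Lstar"
proof -
  have "(\<Sum>(w,u)\<in>arcs. ((\<lambda>x. - dsrc x) w - (\<lambda>x. - dsrc x) u) * flow w u) = 2 * (- dsrc s0 - - dsrc s1)"
    by (rule flow_potential_identity)
  then show ?thesis using dsrc_s0 dsrc_s1 by simp
qed

lemma Lstar_le_cost: "Lstar \<le> cost"
proof -
  have "(\<Sum>(w,u)\<in>arcs. (dsink w - dsink u) * flow w u) \<le> (\<Sum>(w,u)\<in>arcs. L {w,u} * \<bar>flow w u\<bar>)"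
  proof (rule sum_mono, clarify)
    fix w u assume "(w,u) \<in> arcs"
    then have "\<bar>dsink w - dsink u\<bar> \<le> L {w,u}" using dsink_lip arcs_iff by blast
    then have "\<bar>dsink w - dsink u\<bar> * \<bar>flow w u\<bar> \<le> L {w,u} * \<bar>flow w u\<bar>" by (simp add: mult_right_mono)
    moreover have "(dsink w - dsink u) * flow w u \<le> \<bar>dsink w - dsink u\<bar> * \<bar>flow w u\<bar>"
      by (simp only: abs_mult[symmetric] abs_ge_self)
    ultimately show "(dsink w - dsink u) * flow w u \<le> L {w,u} * \<bar>flow w u\<bar>" by linarith
  qed
  then show ?thesis using dsink_flow cost_arcs by simp
qed

lemma slack_sum: "(\<Sum>(w,u)\<in>arcs. 2 * L {w,u} * \<bar>flow w u\<bar> - (dsink w - dsink u + (dsrc u - dsrc w)) * flow w u)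
    = 4 * (cost - Lstar)"
proof -
  have "(\<Sum>(w,u)\<in>arcs. 2 * L {w,u} * \<bar>flow w u\<bar> - (dsink w - dsink u + (dsrc u - dsrc w)) * flow w u)
     = 2 * (\<Sum>(w,u)\<in>arcs. L {w,u} * \<bar>flow w u\<bar>) - (\<Sum>(w,u)\<in>arcs. (dsink w - dsink u) * flow w u)
       - (\<Sum>(w,u)\<in>arcs. (dsrc u - dsrc w) * flow w u)"
    by (simp add: sum_subtractf sum_distrib_left case_prod_beta algebra_simps sum.distrib)
  then show ?thesis using dsink_flow dsrc_flow cost_arcs by simp
qed

definition "excess w u = (if flow w u > 0 \<and> \<not> tight w u then flow w u else 0)"

lemma excess_nonneg: "excess w u \<ge> 0" by (simp add: excess_def)

lemma excess_slack_bound: assumes a: "(w,u) \<in> arcs"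
  shows "gap * excess w u \<le> 2 * L {w,u} * \<bar>flow w u\<bar> - (dsink w - dsink u + (dsrc u - dsrc w)) * flow w u"
proof -
  have sl: "slack w u = 2 * L {w,u} - (dsink w - dsink u) - (dsrc u - dsrc w)" by (simp add: slack_def)
  have s0: "slack w u \<ge> 0" using slack_nonneg[OF a] .
  have s4: "slack w u \<le> 4 * L {w,u}" using slack_le[OF a] .
  have k: "gap > 0" by (rule gap_pos)
  show ?thesis
  proof (cases "flow w u > 0")
    case True
    then have rhs: "2 * L {w,u} * \<bar>flow w u\<bar> - (dsink w - dsink u + (dsrc u - dsrc w)) * flow w u = slack w u * flow w u"
      using True by (simp add: sl algebra_simps)
    show ?thesis
    proof (cases "tight w u")
      case True then show ?thesis using rhs s0 \<open>flow w u > 0\<close> by (simp add: excess_def)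
    next
      case False
      then have "gap \<le> slack w u" using gap_le[OF a] slack_pos[OF a] by blast
      then have "gap * flow w u \<le> slack w u * flow w u" using \<open>flow w u > 0\<close> by (simp add: mult_right_mono)
      then show ?thesis using rhs False \<open>flow w u > 0\<close> by (simp add: excess_def)
    qed
  next
    case False
    then have rhs: "2 * L {w,u} * \<bar>flow w u\<bar> - (dsink w - dsink u + (dsrc u - dsrc w)) * flow w u
        = (- flow w u) * (4 * L {w,u} - slack w u)"
      using False by (simp add: sl algebra_simps)
    have "(- flow w u) * (4 * L {w,u} - slack w u) \<ge> 0" using False s4 by (intro mult_nonneg_nonneg) auto
    then show ?thesis using rhs False by (simp add: excess_def)
  qed
qed

lemma excess_sum_le: "gap * (\<Sum>(w,u)\<in>arcs. excess w u) \<le> 4 * (cost - Lstar)"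
proof -
  have "gap * (\<Sum>(w,u)\<in>arcs. excess w u) = (\<Sum>(w,u)\<in>arcs. gap * excess w u)"
    by (simp add: sum_distrib_left case_prod_beta)
  also have "\<dots> \<le> (\<Sum>(w,u)\<in>arcs. 2 * L {w,u} * \<bar>flow w u\<bar> - (dsink w - dsink u + (dsrc u - dsrc w)) * flow w u)"
    by (rule sum_mono) (use excess_slack_bound in auto)
  finally show ?thesis using slack_sum by simp
qed

lemma flow_sign_defect: assumes a: "(w,u) \<in> arcs"
  shows "\<bar>tsign w u * \<bar>flow w u\<bar> - flow w u\<bar> \<le> 2 * (excess w u + excess u w)"
proof -
  have fa: "flow u w = - flow w u" by (rule flow_anti)
  show ?thesis
  proof (cases "tight w u")
    case True
    then have "\<not> tight u w" using tight_asym by blast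
    then show ?thesis using True fa by (auto simp: tsign_def excess_def)
  next
    case nT: False
    show ?thesis
    proof (cases "tight u w")
      case True
      then show ?thesis using nT fa by (auto simp: tsign_def excess_def)
    next
      case False
      then show ?thesis using nT fa by (auto simp: tsign_def excess_def)
    qed
  qed
qed

lemma nontight_flow_bound: "\<not> tight w u \<Longrightarrow> \<not> tight u w \<Longrightarrow> \<bar>flow w u\<bar> \<le> excess w u + excess u w"
  using flow_anti[of u w] by (auto simp: excess_def)

lemma nbr_arcs: "u \<in> nbr w \<Longrightarrow> (w,u) \<in> arcs"
  by (auto simp: nbr_def arcs_iff)

lemma excess_local: assumes w: "w \<in> N"
  shows "(\<Sum>u\<in>nbr w. excess w u + excess u w) \<le> 2 * (\<Sum>(w,u)\<in>arcs. excess w u)"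
proof -
  have g: "(\<Sum>u\<in>nbr w. g w u) \<le> (\<Sum>(w,u)\<in>arcs. g w u)" if nn: "\<And>a b. g a b \<ge> 0" for g :: "_ \<Rightarrow> _ \<Rightarrow> real"
  proof -
    have "(\<Sum>u\<in>nbr w. g w u) \<le> (\<Sum>x\<in>N. \<Sum>u\<in>nbr x. g x u)"
      by (rule member_le_sum[OF w, of "\<lambda>x. \<Sum>u\<in>nbr x. g x u"]) (auto intro: sum_nonneg nn simp: finN)
    then show ?thesis using sum_arcs_Sigma[of g] by simp
  qed
  have "(\<Sum>u\<in>nbr w. excess w u) \<le> (\<Sum>(w,u)\<in>arcs. excess w u)" using g[of excess] excess_nonneg by blast
  moreover have "(\<Sum>u\<in>nbr w. excess u w) \<le> (\<Sum>(w,u)\<in>arcs. excess u w)" using g[of "\<lambda>a b. excess b a"] excess_nonneg by blast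
  moreover have "(\<Sum>(w,u)\<in>arcs. excess u w) = (\<Sum>(w,u)\<in>arcs. excess w u)" by (rule sum_arcs_swap[symmetric])
  ultimately show ?thesis by (simp add: sum.distrib)
qed

lemma kirchhoff_defect_le:
  assumes w: "w \<in> N"
  shows "\<bar>(\<Sum>u\<in>nbr w. tsign w u * \<bar>Q {w,u}\<bar>) - bvec s0 s1 w\<bar> \<le> 4 * (\<Sum>(w,u)\<in>arcs. excess w u)"
proof -
  have "(\<Sum>u\<in>nbr w. tsign w u * \<bar>Q {w,u}\<bar>) = (\<Sum>u\<in>nbr w. tsign w u * \<bar>flow w u\<bar>)"
    by (rule sum.cong) (simp_all add: Q_arc(1) nbr_arcs)
  then have "(\<Sum>u\<in>nbr w. tsign w u * \<bar>Q {w,u}\<bar>) - bvec s0 s1 w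
      = (\<Sum>u\<in>nbr w. tsign w u * \<bar>flow w u\<bar> - flow w u)"
    using kirchhoff[OF w] by (simp add: sum_subtractf)
  also have "\<bar>\<dots>\<bar> \<le> (\<Sum>u\<in>nbr w. \<bar>tsign w u * \<bar>flow w u\<bar> - flow w u\<bar>)"
    by (rule sum_abs)
  also have "\<dots> \<le> (\<Sum>u\<in>nbr w. 2 * (excess w u + excess u w))"
    by (rule sum_mono) (rule flow_sign_defect[OF nbr_arcs])
  also have "\<dots> = 2 * (\<Sum>u\<in>nbr w. excess w u + excess u w)" by (simp add: sum_distrib_left)
  also have "\<dots> \<le> 4 * (\<Sum>(w,u)\<in>arcs. excess w u)" using excess_local[OF w] by simp
  finally show ?thesis .
qed

end

lemma amgm_resistance: assumes l: "l > 0" and d: "d > 0" shows "l * \<bar>q\<bar> / d \<le> (l * q\<^sup>2 / d + l / d) / (2::real)"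
proof -
  have "2 * \<bar>q\<bar> * 1 \<le> \<bar>q\<bar>\<^sup>2 + 1\<^sup>2" by (rule sum_squares_bound)
  then have h: "2 * \<bar>q\<bar> \<le> q\<^sup>2 + 1" by simp
  have "(l / d) * (2 * \<bar>q\<bar>) \<le> (l / d) * (q\<^sup>2 + 1)"
    using h l d by (intro mult_left_mono) auto
  moreover have "(l / d) * (2 * \<bar>q\<bar>) = 2 * (l * \<bar>q\<bar> / d)" by simp
  moreover have "(l / d) * (q\<^sup>2 + 1) = 2 * ((l * q\<^sup>2 / d + l / d) / 2)" using d by (simp add: field_simps)
  ultimately show ?thesis by linarith
qed

context flow_snapshot
begin

lemma potential_drop: assumes a: "(a,b) \<in> arcs" shows "\<bar>p a - p b\<bar> = L {a,b} * \<bar>Q {a,b}\<bar> / D {a,b}"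
proof -
  have L: "L {a,b} > 0" and D: "D {a,b} > 0" using arc_pos[OF a] by auto
  have "\<bar>flow a b\<bar> = \<bar>p a - p b\<bar> * (D {a,b} / L {a,b})" using L D by (simp add: flow_def abs_mult)
  then have "L {a,b} * \<bar>Q {a,b}\<bar> / D {a,b} = L {a,b} * (\<bar>p a - p b\<bar> * (D {a,b} / L {a,b})) / D {a,b}"
    using Q_arc(1)[OF a] by simp
  also have "\<dots> = \<bar>p a - p b\<bar>" using L D by (simp add: field_simps)
  finally show ?thesis by simp
qed

lemma vol_pos: "vol > 0"
  unfolding vol_def using E_ne finE D_pos Lpos
  by (intro sum_pos) auto

text \<open>Cauchy-Schwarz: the squared cost is at most energy times volume.\<close>
lemma cost_sq_le: "cost\<^sup>2 \<le> energy * vol"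
proof -
  define t where "t = cost / vol"
  have pt: "L e * (Q e)\<^sup>2 / D e \<ge> 2 * t * (L e * \<bar>Q e\<bar>) - t\<^sup>2 * (L e * D e)" if e: "e \<in> E" for e
  proof -
    have L: "L e > 0" and D: "D e > 0" using e Lpos D_pos by auto
    have "L e * (\<bar>Q e\<bar> - t * D e)\<^sup>2 / D e \<ge> 0" using L D by simp
    moreover have "L e * (\<bar>Q e\<bar> - t * D e)\<^sup>2 / D e = L e * (Q e)\<^sup>2 / D e - (2 * t * (L e * \<bar>Q e\<bar>) - t\<^sup>2 * (L e * D e))"
      using D by (simp add: power2_eq_square field_simps)
    ultimately show ?thesis by linarith
  qed
  have "energy \<ge> (\<Sum>e\<in>E. 2 * t * (L e * \<bar>Q e\<bar>) - t\<^sup>2 * (L e * D e))"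
    unfolding energy_def by (rule sum_mono) (use pt in auto)
  also have "(\<Sum>e\<in>E. 2 * t * (L e * \<bar>Q e\<bar>) - t\<^sup>2 * (L e * D e)) = 2 * t * cost - t\<^sup>2 * vol"
    by (simp add: cost_def vol_def sum_subtractf sum_distrib_left)
  also have "\<dots> = cost\<^sup>2 / vol" using vol_pos by (simp add: t_def power2_eq_square field_simps)
  finally show ?thesis using vol_pos by (simp add: pos_divide_le_eq)
qed

lemma edge_vol_le: "e \<in> E \<Longrightarrow> L e * D e \<le> vol"
  unfolding vol_def using finE Lpos D_pos
  by (intro member_le_sum) (auto intro: less_imp_le)

context
  fixes P assumes P: "shortest_path E L s0 s1 P"
begin

lemma pedge_arc: "i < length P - 1 \<Longrightarrow> (P ! i, P ! Suc i) \<in> arcs"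
  using shortest_path_edge[OF P] arcs_iff by blast

lemma potential_le_path: "p s0 \<le> (\<Sum>i<length P - 1. L (pedge P i) * \<bar>Q (pedge P i)\<bar> / D (pedge P i))"
proof -
  have n: "length P - 1 < length P" using shortest_path_length[OF P] by simp
  have "p s0 - p s1 = p (P ! 0) - p (P ! (length P - 1))"
    using shortest_path_facts[OF P] by (simp add: hd_conv_nth last_conv_nth)
  also have "\<dots> = (\<Sum>i<length P - 1. p (P ! i) - p (P ! Suc i))"
    by (rule sum_lessThan_telescope'[symmetric])
  also have "\<dots> \<le> (\<Sum>i<length P - 1. L (pedge P i) * \<bar>Q (pedge P i)\<bar> / D (pedge P i))"
  proof (rule sum_mono)
    fix i assume "i \<in> {..<length P - 1}"
    then have "\<bar>p (P ! i) - p (P ! Suc i)\<bar> = L (pedge P i) * \<bar>Q (pedge P i)\<bar> / D (pedge P i)" using potential_drop pedge_arc by auto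
    then show "p (P ! i) - p (P ! Suc i) \<le> L (pedge P i) * \<bar>Q (pedge P i)\<bar> / D (pedge P i)" by linarith
  qed
  finally show ?thesis using p_s1 by simp
qed

lemma path_energy_le: "(\<Sum>i<length P - 1. L (pedge P i) * (Q (pedge P i))\<^sup>2 / D (pedge P i)) \<le> energy"
proof -
  have "(\<Sum>i<length P - 1. L (pedge P i) * (Q (pedge P i))\<^sup>2 / D (pedge P i)) = (\<Sum>e\<in>pedge P ` {..<length P - 1}. L e * (Q e)\<^sup>2 / D e)"
  proof -
    have "(\<Sum>e\<in>pedge P ` {..<length P - 1}. L e * (Q e)\<^sup>2 / D e) = sum ((\<lambda>e. L e * (Q e)\<^sup>2 / D e) \<circ> pedge P) {..<length P - 1}"
      by (rule sum.reindex[OF shortest_path_edges_inj[OF P]])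
    then show ?thesis by (simp add: comp_def)
  qed
  also have "\<dots> \<le> energy" unfolding energy_def
  proof (rule sum_mono2[OF finE])
    show "pedge P ` {..<length P - 1} \<subseteq> E" using shortest_path_edge[OF P] by auto
    show "0 \<le> L b * (Q b)\<^sup>2 / D b" if "b \<in> E - pedge P ` {..<length P - 1}" for b
    proof -
      have "L b > 0" "D b > 0" using that Lpos D_pos by auto
      then show ?thesis by simp
    qed
  qed
  finally show ?thesis .
qed

lemma energy_le_path_resistance: "energy \<le> (\<Sum>i<length P - 1. L (pedge P i) / D (pedge P i))"
proof -
  have "p s0 \<le> (\<Sum>i<length P - 1. L (pedge P i) * \<bar>Q (pedge P i)\<bar> / D (pedge P i))" by (rule potential_le_path)
  also have "\<dots> \<le> (\<Sum>i<length P - 1. (L (pedge P i) * (Q (pedge P i))\<^sup>2 / D (pedge P i) + L (pedge P i) / D (pedge P i)) / 2)"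
  proof (rule sum_mono)
    fix i assume i: "i \<in> {..<length P - 1}"
    have L: "L (pedge P i) > 0" and D: "D (pedge P i) > 0" using arc_pos pedge_arc i by auto
    show "L (pedge P i) * \<bar>Q (pedge P i)\<bar> / D (pedge P i) \<le> (L (pedge P i) * (Q (pedge P i))\<^sup>2 / D (pedge P i) + L (pedge P i) / D (pedge P i)) / 2"
      by (rule amgm_resistance[OF L D])
  qed
  also have "\<dots> = ((\<Sum>i<length P - 1. L (pedge P i) * (Q (pedge P i))\<^sup>2 / D (pedge P i)) + (\<Sum>i<length P - 1. L (pedge P i) / D (pedge P i))) / 2"
    by (simp only: sum_divide_distrib[symmetric] sum.distrib)
  finally have "p s0 \<le> \<dots>" .
  then have "2 * p s0 \<le> (\<Sum>i<length P - 1. L (pedge P i) * (Q (pedge P i))\<^sup>2 / D (pedge P i)) + (\<Sum>i<length P - 1. L (pedge P i) / D (pedge P i))"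
    by simp
  then show ?thesis using path_energy_le energy_eq_potential by linarith
qed

lemma path_len_sum: "(\<Sum>i<length P - 1. L (pedge P i)) = Lstar" using shortest_path_facts(6)[OF P] .

lemma pedge_pos: "i < length P - 1 \<Longrightarrow> L (pedge P i) > 0 \<and> D (pedge P i) > 0"
  using arc_pos[OF pedge_arc] by auto

lemma lyap_rate_lower_static:
  "(\<Sum>i<length P - 1. L (pedge P i) * ((\<bar>Q (pedge P i)\<bar> - D (pedge P i)) / D (pedge P i))) - Lstar * ((cost - vol) / vol)
     \<ge> Lstar * (cost - Lstar) / vol"
proof -
  define S where "S = (\<Sum>i<length P - 1. L (pedge P i) * \<bar>Q (pedge P i)\<bar> / D (pedge P i))"
  have c: "vol > 0" by (rule vol_pos)
  have "(\<Sum>i<length P - 1. L (pedge P i) * ((\<bar>Q (pedge P i)\<bar> - D (pedge P i)) / D (pedge P i)))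
      = (\<Sum>i<length P - 1. L (pedge P i) * \<bar>Q (pedge P i)\<bar> / D (pedge P i) - L (pedge P i))"
  proof (rule sum.cong[OF refl])
    fix i assume "i \<in> {..<length P - 1}"
    then have "D (pedge P i) > 0" using pedge_pos by auto
    then show "L (pedge P i) * ((\<bar>Q (pedge P i)\<bar> - D (pedge P i)) / D (pedge P i)) = L (pedge P i) * \<bar>Q (pedge P i)\<bar> / D (pedge P i) - L (pedge P i)"
      by (simp add: field_simps)
  qed
  also have "\<dots> = S - Lstar" by (simp only: sum_subtractf S_def path_len_sum)
  finally have e1: "(\<Sum>i<length P - 1. L (pedge P i) * ((\<bar>Q (pedge P i)\<bar> - D (pedge P i)) / D (pedge P i))) = S - Lstar" .
  have e2: "Lstar * ((cost - vol) / vol) = Lstar * cost / vol - Lstar" using c by (simp add: field_simps)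
  have S: "S \<ge> energy" using potential_le_path energy_eq_potential by (simp add: S_def)
  have "energy \<ge> cost\<^sup>2 / vol" using cost_sq_le c by (simp add: pos_divide_le_eq)
  moreover have "cost * (cost - Lstar) / vol = cost\<^sup>2 / vol - Lstar * cost / vol"
    using c by (simp add: power2_eq_square field_simps)
  ultimately have "S - Lstar * cost / vol \<ge> cost * (cost - Lstar) / vol" using S by linarith
  moreover have "cost * (cost - Lstar) / vol \<ge> Lstar * (cost - Lstar) / vol"
    using Lstar_le_cost Lstar_pos c by (intro divide_right_mono mult_right_mono) auto
  ultimately show ?thesis using e1 e2 by linarith
qed

lemma lyap_upper_static:
  "(\<Sum>i<length P - 1. L (pedge P i) * ln (D (pedge P i))) - Lstar * ln vol \<le> (\<Sum>i<length P - 1. L (pedge P i) * (- ln (L (pedge P i))))"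
proof -
  have "(\<Sum>i<length P - 1. L (pedge P i) * ln (D (pedge P i))) - Lstar * ln vol = (\<Sum>i<length P - 1. L (pedge P i) * (ln (D (pedge P i)) - ln vol))"
    by (simp add: sum_subtractf right_diff_distrib path_len_sum[symmetric] sum_distrib_right)
  also have "\<dots> \<le> (\<Sum>i<length P - 1. L (pedge P i) * (- ln (L (pedge P i))))"
  proof (rule sum_mono)
    fix i assume i: "i \<in> {..<length P - 1}"
    have L: "L (pedge P i) > 0" and D: "D (pedge P i) > 0" using pedge_pos i by auto
    have "L (pedge P i) * D (pedge P i) \<le> vol" using edge_vol_le shortest_path_edge[OF P] i by auto
    then have "ln (L (pedge P i) * D (pedge P i)) \<le> ln vol" using L D vol_pos by (subst ln_le_cancel_iff) auto
    then have "ln (D (pedge P i)) - ln vol \<le> - ln (L (pedge P i))" using L D by (simp add: ln_mult)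
    then show "L (pedge P i) * (ln (D (pedge P i)) - ln vol) \<le> L (pedge P i) * (- ln (L (pedge P i)))"
      using L by (intro mult_left_mono) auto
  qed
  finally show ?thesis .
qed

lemma path_edge_log_lower: assumes j: "j < length P - 1"
  shows "L (pedge P j) * (ln (D (pedge P j)) - ln vol) \<ge>
     ((\<Sum>i<length P - 1. L (pedge P i) * ln (D (pedge P i))) - Lstar * ln vol) - (\<Sum>i<length P - 1. \<bar>L (pedge P i) * ln (L (pedge P i))\<bar>)"
proof -
  define a where "a i = L (pedge P i) * (ln (D (pedge P i)) - ln vol)" for i
  define b where "b i = \<bar>L (pedge P i) * ln (L (pedge P i))\<bar>" for i
  have ab: "a i \<le> b i" if "i < length P - 1" for i
  proof -
    have L: "L (pedge P i) > 0" and D: "D (pedge P i) > 0" using pedge_pos that by auto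
    have "L (pedge P i) * D (pedge P i) \<le> vol" using edge_vol_le shortest_path_edge[OF P] that by auto
    then have "ln (L (pedge P i) * D (pedge P i)) \<le> ln vol" using L D vol_pos by (subst ln_le_cancel_iff) auto
    then have "ln (D (pedge P i)) - ln vol \<le> - ln (L (pedge P i))" using L D by (simp add: ln_mult)
    then have "a i \<le> L (pedge P i) * (- ln (L (pedge P i)))" unfolding a_def using L by (intro mult_left_mono) auto
    also have "\<dots> \<le> b i" unfolding b_def by linarith
    finally show ?thesis .
  qed
  have G: "(\<Sum>i<length P - 1. L (pedge P i) * ln (D (pedge P i))) - Lstar * ln vol = (\<Sum>i<length P - 1. a i)"
    by (simp add: a_def sum_subtractf right_diff_distrib path_len_sum[symmetric] sum_distrib_right)
  have jS: "j \<in> {..<length P - 1}" using j by simp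
  have "(\<Sum>i<length P - 1. a i) = a j + (\<Sum>i\<in>{..<length P - 1} - {j}. a i)"
    by (rule sum.remove[OF _ jS]) simp
  moreover have "(\<Sum>i\<in>{..<length P - 1} - {j}. a i) \<le> (\<Sum>i\<in>{..<length P - 1} - {j}. b i)"
    by (rule sum_mono) (use ab in auto)
  moreover have "(\<Sum>i\<in>{..<length P - 1} - {j}. b i) \<le> (\<Sum>i<length P - 1. b i)"
    by (rule sum_mono2) (auto simp: b_def)
  ultimately show ?thesis using G by (simp add: a_def b_def)
qed

end

end

section \<open>Analytic tools\<close>

lemma has_derivative_at_interior: assumes "(f has_real_derivative f') (at t within {0..})" "0 < t"
  shows "(f has_real_derivative f') (at t)"
proof -
  have "(f has_real_derivative f') (at t within {0<..})"
    by (rule has_field_derivative_subset[OF assms(1)]) auto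
  then show ?thesis using at_within_open[of t "{0<..}"] assms(2) by simp
qed

lemma deriv_nonneg_mono:
  assumes d: "\<And>t. t \<ge> 0 \<Longrightarrow> (y has_real_derivative y' t) (at t within {0..})"
    and nn: "\<And>t. a < t \<Longrightarrow> t < b \<Longrightarrow> y' t \<ge> 0"
    and a: "0 \<le> a" and ab: "a \<le> b"
  shows "y a \<le> y b"
proof (rule DERIV_nonneg_imp_increasing_open[OF ab])
  fix x assume x: "a < x" "x < b"
  then have "(y has_real_derivative y' x) (at x)" using has_derivative_at_interior[OF d] a by auto
  then show "\<exists>z. (y has_real_derivative z) (at x) \<and> 0 \<le> z" using nn x by blast
next
  have "continuous (at x within {0..}) y" if "x \<in> {0..}" for x
    using DERIV_continuous[OF d] that by auto
  then have "continuous_on {0..} y" by (simp add: continuous_on_eq_continuous_within)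
  then show "continuous_on {a..b} y" by (rule continuous_on_subset) (use a in auto)
qed

lemma linear_comparison:
  assumes d: "\<And>t. t \<ge> 0 \<Longrightarrow> (y has_real_derivative y' t) (at t within {0..})"
    and le: "\<And>t. T < t \<Longrightarrow> y' t \<le> - y t + a"
    and T: "0 \<le> T" and t: "T \<le> t"
  shows "y t \<le> a + exp (- (t - T)) * (y T - a)"
proof -
  define h where "h \<tau> = exp \<tau> * (y \<tau> - a)" for \<tau>
  have hd: "(h has_real_derivative (exp \<tau> * (y \<tau> - a) + exp \<tau> * y' \<tau>)) (at \<tau> within {0..})"
    if "\<tau> \<ge> 0" for \<tau>
    unfolding h_def using d[OF that]
    by (auto intro!: derivative_eq_intros simp: algebra_simps)
  have "(\<lambda>\<tau>. - h \<tau>) T \<le> (\<lambda>\<tau>. - h \<tau>) t"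
  proof (rule deriv_nonneg_mono[OF _ _ T t])
    show "((\<lambda>\<tau>. - h \<tau>) has_real_derivative - (exp \<tau> * (y \<tau> - a) + exp \<tau> * y' \<tau>)) (at \<tau> within {0..})"
      if "\<tau> \<ge> 0" for \<tau> using hd[OF that] by (rule DERIV_minus)
    show "0 \<le> - (exp \<tau> * (y \<tau> - a) + exp \<tau> * y' \<tau>)" if "T < \<tau>" "\<tau> < t" for \<tau>
    proof -
      have "exp \<tau> * (y \<tau> - a + y' \<tau>) \<le> 0" using le[OF that(1)] by (simp add: mult_nonneg_nonpos)
      then show ?thesis by (simp add: algebra_simps)
    qed
  qed
  then have "exp t * (y t - a) \<le> exp T * (y T - a)" by (simp add: h_def)
  then have "y t - a \<le> exp T * (y T - a) / exp t" by (simp add: field_simps)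
  also have "\<dots> = exp (- (t - T)) * (y T - a)" by (simp add: exp_diff exp_minus field_simps)
  finally show ?thesis by simp
qed

lemma mono_bounded_tendsto:
  fixes G :: "real \<Rightarrow> real"
  assumes mono: "\<And>s t. 0 \<le> s \<Longrightarrow> s \<le> t \<Longrightarrow> G s \<le> G t"
    and bd: "\<And>t. 0 \<le> t \<Longrightarrow> G t \<le> B"
  shows "\<And>t. 0 \<le> t \<Longrightarrow> G t \<le> Sup (G ` {0..})" "(G \<longlongrightarrow> Sup (G ` {0..})) at_top"
proof -
  have bdd: "bdd_above (G ` {0..})" using bd by (intro bdd_aboveI2[of _ _ B]) auto
  show le: "G t \<le> Sup (G ` {0..})" if "0 \<le> t" for t using bdd that by (auto intro: cSup_upper)
  show "(G \<longlongrightarrow> Sup (G ` {0..})) at_top"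
  proof (rule tendstoI)
    fix e :: real assume e: "e > 0"
    have "Sup (G ` {0..}) - e < Sup (G ` {0..})" using e by simp
    moreover have ne: "G ` {0..} \<noteq> {}" by auto
    ultimately obtain z where z: "z \<in> G ` {0..}" "Sup (G ` {0..}) - e < z"
      by (rule less_cSupE)
    then obtain s where s: "s \<in> {0..}" "Sup (G ` {0..}) - e < G s" by auto
    have "\<forall>t\<ge>s. dist (G t) (Sup (G ` {0..})) < e"
    proof (intro allI impI)
      fix t assume "t \<ge> s"
      then have "G s \<le> G t" "G t \<le> Sup (G ` {0..})" using mono s le by auto
      then show "dist (G t) (Sup (G ` {0..})) < e" using s by (simp add: dist_real_def)
    qed
    then show "eventually (\<lambda>t. dist (G t) (Sup (G ` {0..})) < e) at_top"
      by (auto simp: eventually_at_top_linorder)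
  qed
qed

text \<open>Both signs of
  y are handled by comparing sigma y + K (B - G) with the equation v' = -v + const.\<close>
lemma relaxation_bound:
  fixes y f G g :: "real \<Rightarrow> real"
  assumes yd: "\<And>t. t \<ge> 0 \<Longrightarrow> (y has_real_derivative (f t - y t)) (at t within {0..})"
    and Gd: "\<And>t. t \<ge> 0 \<Longrightarrow> (G has_real_derivative g t) (at t within {0..})"
    and Gmono: "\<And>s t. 0 \<le> s \<Longrightarrow> s \<le> t \<Longrightarrow> G s \<le> G t"
    and fb: "\<And>t. t > 0 \<Longrightarrow> \<bar>f t\<bar> \<le> K * g t"
    and K: "K \<ge> 0"
    and Gle: "\<And>t. 0 \<le> t \<Longrightarrow> G t \<le> B"
    and T: "0 \<le> T" and t: "T \<le> t"
  shows "\<bar>y t\<bar> \<le> K * (B - G T) + exp (- (t - T)) * \<bar>y T\<bar>"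
proof -
  have signed: "\<sigma> * y t \<le> K * (B - G T) + exp (- (t - T)) * (\<sigma> * y T)"
    if \<sigma>: "\<sigma> = 1 \<or> \<sigma> = -1" for \<sigma>
  proof -
    define V where "V \<tau> = \<sigma> * y \<tau> + K * (B - G \<tau>)" for \<tau>
    have Vd: "(V has_real_derivative (\<sigma> * (f \<tau> - y \<tau>) - K * g \<tau>)) (at \<tau> within {0..})"
      if "\<tau> \<ge> 0" for \<tau>
      unfolding V_def using yd[OF that] Gd[OF that] by (auto intro!: derivative_eq_intros)
    have "V t \<le> K * (B - G T) + exp (- (t - T)) * (V T - K * (B - G T))"
    proof (rule linear_comparison[OF Vd _ T t])
      fix \<tau> assume \<tau>: "T < \<tau>"
      have "\<sigma> * f \<tau> \<le> \<bar>f \<tau>\<bar>" using \<sigma> by auto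
      also have "\<dots> \<le> K * g \<tau>" using fb \<tau> T by auto
      finally have "\<sigma> * f \<tau> \<le> K * g \<tau>" .
      moreover have "K * (B - G \<tau>) \<le> K * (B - G T)"
        using Gmono[OF T] \<tau> K by (auto intro: mult_left_mono)
      ultimately show "\<sigma> * (f \<tau> - y \<tau>) - K * g \<tau> \<le> - V \<tau> + K * (B - G T)"
        by (simp add: V_def algebra_simps)
    qed
    moreover have "K * (B - G t) \<ge> 0" using Gle T t K by auto
    ultimately show ?thesis by (simp add: V_def)
  qed
  have "exp (- (t - T)) * y T \<le> exp (- (t - T)) * \<bar>y T\<bar>"
    and "exp (- (t - T)) * (- y T) \<le> exp (- (t - T)) * \<bar>y T\<bar>"
    by (intro mult_left_mono; simp)+
  moreover have "y t \<le> K * (B - G T) + exp (- (t - T)) * y T" using signed[of 1] by simp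
  moreover have "- y t \<le> K * (B - G T) + exp (- (t - T)) * (- y T)" using signed[of "-1"] by simp
  ultimately show ?thesis by linarith
qed

lemma exp_shift_tendsto_zero: "((\<lambda>t. exp (- (t - T)) * c) \<longlongrightarrow> 0) at_top" for T c :: real
proof -
  have "((\<lambda>t::real. exp (- t)) \<longlongrightarrow> 0) at_top"
    using filterlim_compose[OF exp_at_bot filterlim_uminus_at_bot_at_top] by simp
  then have "((\<lambda>t. (exp T * c) * exp (- t)) \<longlongrightarrow> 0) at_top" by (rule tendsto_mult_right_zero)
  then show ?thesis by (simp add: exp_diff exp_minus field_simps)
qed

text \<open>Consequently such a y tends to zero: G converges to its supremum, so both terms of the
  relaxation estimate become small.\<close>
lemma relaxation_tendsto_zero:
  fixes y f G g :: "real \<Rightarrow> real"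
  assumes yd: "\<And>t. t \<ge> 0 \<Longrightarrow> (y has_real_derivative (f t - y t)) (at t within {0..})"
    and Gd: "\<And>t. t \<ge> 0 \<Longrightarrow> (G has_real_derivative g t) (at t within {0..})"
    and gnn: "\<And>t. t > 0 \<Longrightarrow> g t \<ge> 0"
    and fb: "\<And>t. t > 0 \<Longrightarrow> \<bar>f t\<bar> \<le> K * g t"
    and K: "K \<ge> 0"
    and Gb: "\<And>t. 0 \<le> t \<Longrightarrow> G t \<le> B"
  shows "(y \<longlongrightarrow> 0) at_top"
proof (rule tendstoI)
  fix e :: real assume e: "e > 0"
  have Gmono: "G s \<le> G t" if "0 \<le> s" "s \<le> t" for s t
    by (rule deriv_nonneg_mono[OF Gd _ that]) (use gnn that in auto)
  define Gs where "Gs = Sup (G ` {0..})"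
  have Gle: "G t \<le> Gs" if "0 \<le> t" for t
    using mono_bounded_tendsto(1)[OF Gmono Gb that] by (simp add: Gs_def)
  have "((\<lambda>t. K * (Gs - G t)) \<longlongrightarrow> K * (Gs - Gs)) at_top"
    using mono_bounded_tendsto(2)[OF Gmono Gb] by (intro tendsto_intros) (simp add: Gs_def)
  then have "((\<lambda>t. K * (Gs - G t)) \<longlongrightarrow> 0) at_top" by simp
  from order_tendstoD(2)[OF this, of "e / 2"]
  have "eventually (\<lambda>t. K * (Gs - G t) < e / 2) at_top" using e by simp
  then obtain T0 where T0: "\<And>t. t \<ge> T0 \<Longrightarrow> K * (Gs - G t) < e / 2"
    by (auto simp: eventually_at_top_linorder)
  define T where "T = max T0 0"
  have T: "T \<ge> 0" "K * (Gs - G T) < e / 2" using T0[of T] by (auto simp: T_def)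
  from order_tendstoD(2)[OF exp_shift_tendsto_zero[of T "\<bar>y T\<bar>"], of "e / 2"]
  have "eventually (\<lambda>t. exp (- (t - T)) * \<bar>y T\<bar> < e / 2) at_top" using e by simp
  then have "eventually (\<lambda>t. exp (- (t - T)) * \<bar>y T\<bar> < e / 2 \<and> T \<le> t) at_top"
    by (intro eventually_conj eventually_ge_at_top)
  then show "eventually (\<lambda>t. dist (y t) 0 < e) at_top"
  proof (rule eventually_mono)
    fix t assume "exp (- (t - T)) * \<bar>y T\<bar> < e / 2 \<and> T \<le> t"
    then show "dist (y t) 0 < e"
      using relaxation_bound[OF yd Gd Gmono fb K Gle T(1), of t] T(2) by simp
  qed
qed

lemma bounded_convergent_subseq:
  fixes X :: "nat \<Rightarrow> 'e \<Rightarrow> real"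
  assumes fin: "finite S" and bd: "\<forall>k. \<forall>e\<in>S. \<bar>X k e\<bar> \<le> B"
  shows "\<exists>r x. strict_mono r \<and> (\<forall>e\<in>S. (\<lambda>k. X (r k) e) \<longlonglongrightarrow> x e)"
  using fin bd
proof (induction S)
  case empty
  show ?case by (intro exI[of _ id] exI[of _ "\<lambda>e. 0"]) (simp add: strict_mono_def)
next
  case (insert e A)
  then obtain r x where r: "strict_mono r" and x: "\<forall>e'\<in>A. (\<lambda>k. X (r k) e') \<longlonglongrightarrow> x e'" by auto
  define s where "s k = X (r k) e" for k
  obtain f where f: "strict_mono f" "monoseq (\<lambda>n. s (f n))" using seq_monosub by blast
  have "Bseq (\<lambda>n. s (f n))" using insert.prems by (intro BseqI'[of _ B]) (auto simp: s_def)
  then have "convergent (\<lambda>n. s (f n))" using f(2) by (rule Bseq_monoseq_convergent)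
  then have cs: "(\<lambda>n. s (f n)) \<longlonglongrightarrow> lim (\<lambda>n. s (f n))" by (simp add: convergent_LIMSEQ_iff)
  show ?case
  proof (intro exI[of _ "r \<circ> f"] exI[of _ "x(e := lim (\<lambda>n. s (f n)))"] conjI ballI)
    show "strict_mono (r \<circ> f)" using r f(1) by (rule strict_mono_o)
  next
    fix e' assume e': "e' \<in> insert e A"
    show "(\<lambda>k. X ((r \<circ> f) k) e') \<longlonglongrightarrow> (x(e := lim (\<lambda>n. s (f n)))) e'"
    proof (cases "e' = e")
      case True then show ?thesis using cs by (simp add: s_def)
    next
      case False
      then have "e' \<in> A" using e' by simp
      then have "((\<lambda>k. X (r k) e') \<circ> f) \<longlonglongrightarrow> x e'" using x f(1) by (intro LIMSEQ_subseq_LIMSEQ) auto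
      then show ?thesis using False by (simp add: comp_def)
    qed
  qed
qed

lemma lp_setdist_le:
  fixes Y y :: "'e \<Rightarrow> real"
  assumes fin: "finite E" "E \<noteq> {}" and q: "q \<ge> 1" and y: "y \<in> S"
    and close: "\<forall>e\<in>E. \<bar>Y e - y e\<bar> \<le> \<delta>"
  shows "0 \<le> lp_setdist q E Y S" "lp_setdist q E Y S \<le> real (card E) * \<delta>"
proof -
  define c where "c = real (card E)"
  have c1: "c \<ge> 1" using fin by (simp add: c_def Suc_le_eq card_gt_0_iff)
  have \<delta>: "\<delta> \<ge> 0" using close fin by force
  let ?f = "\<lambda>x. (\<Sum>e\<in>E. \<bar>Y e - x e\<bar> powr q) powr (1 / q)"
  show "0 \<le> lp_setdist q E Y S"
    unfolding lp_setdist_def by (rule cInf_greatest) (use y in auto)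
  have "lp_setdist q E Y S \<le> ?f y"
    unfolding lp_setdist_def by (rule cInf_lower) (use y in \<open>auto intro: bdd_belowI2[where m=0]\<close>)
  also have "\<dots> \<le> (c * \<delta> powr q) powr (1 / q)"
  proof (rule powr_mono2)
    have "(\<Sum>e\<in>E. \<bar>Y e - y e\<bar> powr q) \<le> (\<Sum>e\<in>E. \<delta> powr q)"
      by (rule sum_mono, rule powr_mono2) (use q close in auto)
    then show "(\<Sum>e\<in>E. \<bar>Y e - y e\<bar> powr q) \<le> c * \<delta> powr q" by (simp add: c_def)
  qed (use q in \<open>auto intro: sum_nonneg\<close>)
  also have "\<dots> = c powr (1 / q) * \<delta>"
    using q \<delta> c1 by (simp add: powr_mult powr_powr)
  also have "\<dots> \<le> c * \<delta>"
  proof -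
    have "c powr (1 / q) \<le> c powr 1" by (rule powr_mono) (use q c1 in auto)
    then show ?thesis using \<delta> c1 by (intro mult_right_mono) auto
  qed
  finally show "lp_setdist q E Y S \<le> real (card E) * \<delta>" by (simp add: c_def)
qed

lemma linf_setdist_le:
  fixes Y y :: "'e \<Rightarrow> real"
  assumes fin: "finite E" "E \<noteq> {}" and y: "y \<in> S"
    and close: "\<forall>e\<in>E. \<bar>Y e - y e\<bar> \<le> \<delta>"
  shows "0 \<le> linf_setdist E Y S" "linf_setdist E Y S \<le> \<delta>"
proof -
  let ?f = "\<lambda>x. Max ((\<lambda>e. \<bar>Y e - x e\<bar>) ` E)"
  have nn: "?f x \<ge> 0" for x
  proof -
    obtain e where "e \<in> E" using fin by blast
    then have "\<bar>Y e - x e\<bar> \<le> ?f x" using fin by (intro Max_ge) auto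
    then show ?thesis by linarith
  qed
  show "0 \<le> linf_setdist E Y S"
    unfolding linf_setdist_def by (rule cInf_greatest) (use y nn in auto)
  have "linf_setdist E Y S \<le> ?f y"
    unfolding linf_setdist_def by (rule cInf_lower) (use y nn in \<open>auto intro: bdd_belowI2[where m=0]\<close>)
  also have "\<dots> \<le> \<delta>" using close fin by (subst Max_le_iff) auto
  finally show "linf_setdist E Y S \<le> \<delta>" .
qed

lemma tendsto_zero_if_eventually_small:
  fixes f :: "'a \<Rightarrow> real"
  assumes small: "\<And>\<epsilon>. \<epsilon> > 0 \<Longrightarrow> eventually (\<lambda>t. 0 \<le> f t \<and> f t \<le> \<epsilon>) F"
  shows "(f \<longlongrightarrow> 0) F"
proof (rule tendstoI)
  fix \<epsilon> :: real assume "\<epsilon> > 0"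
  then have "eventually (\<lambda>t. 0 \<le> f t \<and> f t \<le> \<epsilon> / 2) F" by (intro small) simp
  then show "eventually (\<lambda>t. dist (f t) 0 < \<epsilon>) F"
    by (rule eventually_mono) (use \<open>\<epsilon> > 0\<close> in \<open>auto simp: dist_real_def\<close>)
qed

lemma setdist_tendsto_zero:
  fixes Y :: "'a \<Rightarrow> 'e \<Rightarrow> real"
  assumes fin: "finite E" "E \<noteq> {}"
    and near: "\<And>\<epsilon>. \<epsilon> > 0 \<Longrightarrow> eventually (\<lambda>t. \<exists>y\<in>S. \<forall>e\<in>E. \<bar>Y t e - y e\<bar> < \<epsilon>) F"
  shows "\<forall>q::real. q \<ge> 1 \<longrightarrow> ((\<lambda>t. lp_setdist q E (Y t) S) \<longlongrightarrow> 0) F"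
    and "((\<lambda>t. linf_setdist E (Y t) S) \<longlongrightarrow> 0) F"
proof (intro allI impI)
  fix q :: real assume q: "q \<ge> 1"
  have c: "real (card E) > 0" using fin by (simp add: card_gt_0_iff)
  show "((\<lambda>t. lp_setdist q E (Y t) S) \<longlongrightarrow> 0) F"
  proof (rule tendsto_zero_if_eventually_small)
    fix \<epsilon> :: real assume "\<epsilon> > 0"
    then have "eventually (\<lambda>t. \<exists>y\<in>S. \<forall>e\<in>E. \<bar>Y t e - y e\<bar> < \<epsilon> / real (card E)) F"
      using c by (intro near) simp
    then show "eventually (\<lambda>t. 0 \<le> lp_setdist q E (Y t) S \<and> lp_setdist q E (Y t) S \<le> \<epsilon>) F"
    proof (rule eventually_mono)
      fix t assume "\<exists>y\<in>S. \<forall>e\<in>E. \<bar>Y t e - y e\<bar> < \<epsilon> / real (card E)"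
      then obtain y where "y \<in> S" "\<forall>e\<in>E. \<bar>Y t e - y e\<bar> \<le> \<epsilon> / real (card E)"
        by (auto intro: less_imp_le)
      from lp_setdist_le[OF fin q this] c
      show "0 \<le> lp_setdist q E (Y t) S \<and> lp_setdist q E (Y t) S \<le> \<epsilon>" by simp
    qed
  qed
next
  show "((\<lambda>t. linf_setdist E (Y t) S) \<longlongrightarrow> 0) F"
  proof (rule tendsto_zero_if_eventually_small)
    fix \<epsilon> :: real assume "\<epsilon> > 0"
    then show "eventually (\<lambda>t. 0 \<le> linf_setdist E (Y t) S \<and> linf_setdist E (Y t) S \<le> \<epsilon>) F"
    proof (rule eventually_mono[OF near])
      fix t assume "\<exists>y\<in>S. \<forall>e\<in>E. \<bar>Y t e - y e\<bar> < \<epsilon>"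
      then obtain y where "y \<in> S" "\<forall>e\<in>E. \<bar>Y t e - y e\<bar> \<le> \<epsilon>" by (auto intro: less_imp_le)
      from linf_setdist_le[OF fin this]
      show "0 \<le> linf_setdist E (Y t) S \<and> linf_setdist E (Y t) S \<le> \<epsilon>" by simp
    qed
  qed
qed

section \<open>The Physarum dynamics\<close>

locale physarum = st_network +
  fixes D and p
  assumes Dinit: "\<forall>e\<in>E. D 0 e > 0"
    and pot: "\<forall>t\<ge>0. is_potential N E L (D t) s0 s1 (p t)"
    and dyn: "\<forall>t\<ge>0. \<forall>e\<in>E. ((\<lambda>\<tau>. D \<tau> e) has_real_derivative (\<bar>current L (D t) (p t) e\<bar> - D t e)) (at t within {0..})"

context physarum
begin

abbreviation "cur t e \<equiv> current L (D t) (p t) e"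

lemma D_deriv: "t \<ge> 0 \<Longrightarrow> e \<in> E \<Longrightarrow> ((\<lambda>\<tau>. D \<tau> e) has_real_derivative (\<bar>cur t e\<bar> - D t e)) (at t within {0..})"
  using dyn by blast

text \<open>Diameters stay positive: D' \<ge> -D gives D t \<ge> exp (-t) D 0.\<close>
lemma D_pos: assumes t: "t \<ge> 0" and e: "e \<in> E" shows "D t e > 0"
proof -
  have "(\<lambda>\<tau>. - D \<tau> e) t \<le> 0 + exp (- (t - 0)) * ((\<lambda>\<tau>. - D \<tau> e) 0 - 0)"
  proof (rule linear_comparison[of "\<lambda>\<tau>. - D \<tau> e" "\<lambda>\<tau>. - (\<bar>cur \<tau> e\<bar> - D \<tau> e)" 0 0 t])
    show "((\<lambda>\<tau>. - D \<tau> e) has_real_derivative - (\<bar>cur \<tau> e\<bar> - D \<tau> e)) (at \<tau> within {0..})" if "\<tau> \<ge> 0" for \<tau>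
      using D_deriv[OF that e] by (rule DERIV_minus)
  qed (use t in auto)
  then have "D t e \<ge> exp (- t) * D 0 e" by simp
  moreover have "exp (- t) * D 0 e > 0" using Dinit e by simp
  ultimately show ?thesis by linarith
qed

lemma snapshot: "t \<ge> 0 \<Longrightarrow> flow_snapshot N E L s0 s1 (D t) (p t)"
  unfolding flow_snapshot_def flow_snapshot_axioms_def using st_network_axioms D_pos pot by auto

definition "vol_at t = (\<Sum>e\<in>E. L e * D t e)"

definition "cost_at t = (\<Sum>e\<in>E. L e * \<bar>cur t e\<bar>)"

lemma vol_at_eq: "t \<ge> 0 \<Longrightarrow> flow_snapshot.vol E L (D t) = vol_at t"
  using flow_snapshot.vol_def[OF snapshot] by (simp add: vol_at_def)

lemma cost_at_eq: "t \<ge> 0 \<Longrightarrow> flow_snapshot.cost E L (D t) (p t) = cost_at t"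
  using flow_snapshot.cost_def[OF snapshot] flow_snapshot.Q_def[OF snapshot] by (simp add: cost_at_def)

lemma Q_eq: "t \<ge> 0 \<Longrightarrow> flow_snapshot.Q L (D t) (p t) e = cur t e"
  using flow_snapshot.Q_def[OF snapshot] by simp

lemma vol_at_pos: "t \<ge> 0 \<Longrightarrow> vol_at t > 0" using flow_snapshot.vol_pos[OF snapshot] vol_at_eq by simp

lemma vol_at_deriv: assumes t: "t \<ge> 0" shows "(vol_at has_real_derivative (cost_at t - vol_at t)) (at t within {0..})"
proof -
  have "((\<lambda>\<tau>. \<Sum>e\<in>E. L e * D \<tau> e) has_real_derivative (\<Sum>e\<in>E. L e * (\<bar>cur t e\<bar> - D t e))) (at t within {0..})"
    by (rule DERIV_sum, rule DERIV_cmult, rule D_deriv[OF t]) 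
  moreover have "(\<Sum>e\<in>E. L e * (\<bar>cur t e\<bar> - D t e)) = cost_at t - vol_at t"
    by (simp add: cost_at_def vol_at_def sum_subtractf right_diff_distrib)
  ultimately show ?thesis unfolding vol_at_def[abs_def] by simp
qed

definition "P0 = (SOME P. shortest_path E L s0 s1 P)"

lemma P0: "shortest_path E L s0 s1 P0"
  unfolding P0_def using ex_shortest by (rule someI_ex)

definition "nP = length P0 - 1"

lemma pedge_in_E: "i < nP \<Longrightarrow> pedge P0 i \<in> E" using shortest_path_edge[OF P0] by (simp add: nP_def)

definition "lyap t = (\<Sum>i<nP. L (pedge P0 i) * ln (D t (pedge P0 i))) - Lstar * ln (vol_at t)"

definition "lyap_rate t = (\<Sum>i<nP. L (pedge P0 i) * ((\<bar>cur t (pedge P0 i)\<bar> - D t (pedge P0 i)) / D t (pedge P0 i)))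
   - Lstar * ((cost_at t - vol_at t) / vol_at t)"

lemma ln_deriv: assumes t: "t \<ge> 0" and e: "e \<in> E"
  shows "((\<lambda>\<tau>. ln (D \<tau> e)) has_real_derivative ((\<bar>cur t e\<bar> - D t e) / D t e)) (at t within {0..})"
  using DERIV_chain2[OF DERIV_ln_divide[OF D_pos[OF t e]] D_deriv[OF t e]] by simp

lemma lyap_deriv: assumes t: "t \<ge> 0" shows "(lyap has_real_derivative lyap_rate t) (at t within {0..})"
proof -
  have h1: "((\<lambda>\<tau>. \<Sum>i<nP. L (pedge P0 i) * ln (D \<tau> (pedge P0 i))) has_real_derivative
      (\<Sum>i<nP. L (pedge P0 i) * ((\<bar>cur t (pedge P0 i)\<bar> - D t (pedge P0 i)) / D t (pedge P0 i)))) (at t within {0..})"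
    by (rule DERIV_sum, rule DERIV_cmult, rule ln_deriv[OF t pedge_in_E]) simp
  have h2: "((\<lambda>\<tau>. ln (vol_at \<tau>)) has_real_derivative ((cost_at t - vol_at t) / vol_at t)) (at t within {0..})"
    using DERIV_chain2[OF DERIV_ln_divide[OF vol_at_pos[OF t]] vol_at_deriv[OF t]] by simp
  have "((\<lambda>\<tau>. (\<Sum>i<nP. L (pedge P0 i) * ln (D \<tau> (pedge P0 i))) - Lstar * ln (vol_at \<tau>)) has_real_derivative lyap_rate t) (at t within {0..})"
    unfolding lyap_rate_def by (rule DERIV_diff[OF h1 DERIV_cmult[OF h2]])
  then show ?thesis unfolding lyap_def[abs_def] .
qed

lemma lyap_rate_lower: assumes t: "t \<ge> 0" shows "lyap_rate t \<ge> Lstar * (cost_at t - Lstar) / vol_at t"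
  using flow_snapshot.lyap_rate_lower_static[OF snapshot[OF t] P0] t by (simp add: cost_at_eq vol_at_eq Q_eq lyap_rate_def nP_def)

lemma cost_at_ge: "t \<ge> 0 \<Longrightarrow> cost_at t \<ge> Lstar" using flow_snapshot.Lstar_le_cost[OF snapshot] cost_at_eq by simp

lemma lyap_rate_nonneg: assumes t: "t \<ge> 0" shows "lyap_rate t \<ge> 0"
proof -
  have "Lstar * (cost_at t - Lstar) / vol_at t \<ge> 0" using cost_at_ge[OF t] Lstar_pos vol_at_pos[OF t] by simp
  then show ?thesis using lyap_rate_lower[OF t] by linarith
qed

lemma lyap_mono: "0 \<le> s \<Longrightarrow> s \<le> t \<Longrightarrow> lyap s \<le> lyap t"
  by (rule deriv_nonneg_mono[OF lyap_deriv]) (auto intro: lyap_rate_nonneg)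

definition "lyap_bound = (\<Sum>i<nP. L (pedge P0 i) * (- ln (L (pedge P0 i))))"

definition "log_len_bound = (\<Sum>i<nP. \<bar>L (pedge P0 i) * ln (L (pedge P0 i))\<bar>)"

lemma lyap_upper: "t \<ge> 0 \<Longrightarrow> lyap t \<le> lyap_bound"
  using flow_snapshot.lyap_upper_static[OF snapshot P0] by (simp add: lyap_def lyap_bound_def vol_at_eq nP_def)

text \<open>Since the Lyapunov function never drops below its initial value, each diameter on P0 keeps a
  fixed share of the volume.\<close>
definition "share j = exp ((lyap 0 - log_len_bound) / L (pedge P0 j))"

definition "energy_const = (\<Sum>j<nP. L (pedge P0 j) / share j)"

lemma path_D_lower: assumes t: "t \<ge> 0" and j: "j < nP" shows "D t (pedge P0 j) \<ge> vol_at t * share j"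
proof -
  have L: "L (pedge P0 j) > 0" using Lpos pedge_in_E[OF j] by auto
  have D: "D t (pedge P0 j) > 0" using D_pos[OF t pedge_in_E[OF j]] .
  have c: "vol_at t > 0" using vol_at_pos[OF t] .
  have "L (pedge P0 j) * (ln (D t (pedge P0 j)) - ln (vol_at t)) \<ge> lyap t - log_len_bound"
    using flow_snapshot.path_edge_log_lower[OF snapshot[OF t] P0, of j] j t by (simp add: lyap_def log_len_bound_def vol_at_eq nP_def)
  moreover have "lyap t \<ge> lyap 0" using lyap_mono[OF _ t] by simp
  ultimately have "L (pedge P0 j) * (ln (D t (pedge P0 j)) - ln (vol_at t)) \<ge> lyap 0 - log_len_bound" by linarith
  then have "ln (D t (pedge P0 j)) - ln (vol_at t) \<ge> (lyap 0 - log_len_bound) / L (pedge P0 j)" using L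
    by (simp add: divide_le_eq mult.commute)
  then have "exp ((lyap 0 - log_len_bound) / L (pedge P0 j)) \<le> exp (ln (D t (pedge P0 j)) - ln (vol_at t))" by simp
  also have "\<dots> = D t (pedge P0 j) / vol_at t" using D c by (simp add: exp_diff)
  finally show ?thesis using c by (simp add: share_def pos_le_divide_eq mult.commute)
qed

lemma share_pos: "share j > 0" by (simp add: share_def)

text \<open>Therefore the resistance of P0 and with it the energy and the cost stay bounded.\<close>
lemma cost_at_bound: assumes t: "t \<ge> 0" shows "cost_at t \<le> sqrt energy_const"
proof -
  have c: "vol_at t > 0" using vol_at_pos[OF t] .
  have energy: "flow_snapshot.energy E L (D t) (p t) \<le> (\<Sum>i<nP. L (pedge P0 i) / D t (pedge P0 i))"
    using flow_snapshot.energy_le_path_resistance[OF snapshot[OF t] P0] by (simp add: nP_def)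
  also have "\<dots> \<le> (\<Sum>i<nP. L (pedge P0 i) / (vol_at t * share i))"
  proof (rule sum_mono)
    fix i assume i: "i \<in> {..<nP}"
    have L: "L (pedge P0 i) > 0" using Lpos pedge_in_E i by auto
    show "L (pedge P0 i) / D t (pedge P0 i) \<le> L (pedge P0 i) / (vol_at t * share i)"
      using path_D_lower[OF t] i L c share_pos D_pos[OF t pedge_in_E] by (intro divide_left_mono) auto
  qed
  also have "\<dots> = energy_const / vol_at t" by (simp add: energy_const_def sum_divide_distrib field_simps)
  finally have "flow_snapshot.energy E L (D t) (p t) \<le> energy_const / vol_at t" .
  moreover have "(cost_at t)\<^sup>2 \<le> flow_snapshot.energy E L (D t) (p t) * vol_at t" using flow_snapshot.cost_sq_le[OF snapshot[OF t]] cost_at_eq vol_at_eq t by simp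
  ultimately have "(cost_at t)\<^sup>2 \<le> energy_const / vol_at t * vol_at t" using c by (smt (verit) mult_right_mono)
  then have "(cost_at t)\<^sup>2 \<le> energy_const" using c by simp
  moreover have "cost_at t \<ge> 0" using cost_at_ge[OF t] Lstar_pos by simp
  ultimately show ?thesis by (simp add: real_le_rsqrt)
qed

text \<open>Since vol' = cost - vol and the cost is bounded, the volume is bounded.\<close>
definition "vol_bound = sqrt energy_const + \<bar>vol_at 0\<bar>"

lemma energy_const_nn: "energy_const \<ge> 0"
  unfolding energy_const_def
proof (rule sum_nonneg)
  fix j assume "j \<in> {..<nP}"
  then have "L (pedge P0 j) > 0" using Lpos pedge_in_E by auto
  then show "0 \<le> L (pedge P0 j) / share j" using share_pos[of j] by simp
qed

lemma vol_at_bounded: assumes t: "t \<ge> 0" shows "vol_at t \<le> vol_bound"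
proof -
  have "vol_at t \<le> sqrt energy_const + exp (- (t - 0)) * (vol_at 0 - sqrt energy_const)"
    by (rule linear_comparison[OF vol_at_deriv]) (use cost_at_bound t in auto)
  also have "\<dots> \<le> sqrt energy_const + exp (- t) * \<bar>vol_at 0\<bar>"
  proof -
    have "exp (- t) * (vol_at 0 - sqrt energy_const) \<le> exp (- t) * \<bar>vol_at 0\<bar>"
      using vol_at_pos[of 0] energy_const_nn by (intro mult_left_mono) auto
    then show ?thesis by simp
  qed
  also have "\<dots> \<le> sqrt energy_const + \<bar>vol_at 0\<bar>"
  proof -
    have "exp (- t) \<le> 1" using t by simp
    then have "exp (- t) * \<bar>vol_at 0\<bar> \<le> 1 * \<bar>vol_at 0\<bar>" by (intro mult_right_mono) auto
    then show ?thesis by simp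
  qed
  finally show ?thesis by (simp add: vol_bound_def)
qed

lemma vol_bound_pos: "vol_bound > 0" using vol_at_bounded[of 0] vol_at_pos[of 0] by simp

lemma cost_gap_le: assumes t: "t \<ge> 0" shows "cost_at t - Lstar \<le> (vol_bound / Lstar) * lyap_rate t"
proof -
  have c: "vol_at t > 0" "vol_at t \<le> vol_bound" using vol_at_pos[OF t] vol_at_bounded[OF t] by auto
  have nn: "cost_at t - Lstar \<ge> 0" using cost_at_ge[OF t] by simp
  have "Lstar * (cost_at t - Lstar) / vol_bound \<le> Lstar * (cost_at t - Lstar) / vol_at t"
    using c nn Lstar_pos by (intro divide_left_mono) auto
  then have "Lstar * (cost_at t - Lstar) / vol_bound \<le> lyap_rate t" using lyap_rate_lower[OF t] by linarith
  then have "Lstar * (cost_at t - Lstar) \<le> lyap_rate t * vol_bound" using vol_bound_pos by (simp add: divide_le_eq)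
  then have "cost_at t - Lstar \<le> lyap_rate t * vol_bound / Lstar" using Lstar_pos by (simp add: le_divide_eq mult.commute)
  then show ?thesis by (simp add: field_simps)
qed

text \<open>The total excess is bounded by a constant times the Lyapunov rate, which is integrable.\<close>
definition "excess_const = 4 * vol_bound / (gap * Lstar)"

lemma excess_const_nn: "excess_const \<ge> 0" using vol_bound_pos gap_pos Lstar_pos by (simp add: excess_const_def)

abbreviation "excess_at t \<equiv> flow_snapshot.excess E L s0 s1 (D t) (p t)"

abbreviation "flow_at t \<equiv> flow_snapshot.flow L (D t) (p t)"

lemma excess_sum_le_rate: assumes t: "t \<ge> 0" shows "(\<Sum>(w,u)\<in>arcs. excess_at t w u) \<le> excess_const * lyap_rate t"
proof -
  have "gap * (\<Sum>(w,u)\<in>arcs. excess_at t w u) \<le> 4 * (cost_at t - Lstar)"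
    using flow_snapshot.excess_sum_le[OF snapshot[OF t]] cost_at_eq[OF t] by simp
  also have "\<dots> \<le> 4 * ((vol_bound / Lstar) * lyap_rate t)" using cost_gap_le[OF t] by simp
  finally have h: "gap * (\<Sum>(w,u)\<in>arcs. excess_at t w u) \<le> 4 * ((vol_bound / Lstar) * lyap_rate t)" .
  define X where "X = 4 * ((vol_bound / Lstar) * lyap_rate t)"
  define S where "S = (\<Sum>(w,u)\<in>arcs. excess_at t w u)"
  have "gap * S \<le> X" using h by (simp add: X_def S_def)
  then have "S \<le> X / gap" using gap_pos by (simp add: pos_le_divide_eq mult.commute)
  also have "\<dots> = excess_const * lyap_rate t" using gap_pos Lstar_pos by (simp add: X_def excess_const_def field_simps)
  finally have "S \<le> excess_const * lyap_rate t" .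
  then show ?thesis by (simp add: S_def)
qed

lemma excess_le_sum: assumes t: "t \<ge> 0" and a: "(w,u) \<in> arcs"
  shows "excess_at t w u \<le> (\<Sum>(w,u)\<in>arcs. excess_at t w u)"
proof -
  have "(\<lambda>(w,u). excess_at t w u) (w,u) \<le> (\<Sum>x\<in>arcs. (\<lambda>(w,u). excess_at t w u) x)"
    by (rule member_le_sum[OF a]) (auto simp: flow_snapshot.excess_nonneg[OF snapshot[OF t]] fin_arcs)
  then show ?thesis by simp
qed

text \<open>Diameters of non-tight edges tend to zero: their current is pure excess, so the relaxation
  lemma applies with the Lyapunov function as G.\<close>
lemma nontight_edge_vanishes: assumes e: "{a,b} \<in> E" and n1: "\<not> tight a b" and n2: "\<not> tight b a"
  shows "((\<lambda>t. D t {a,b}) \<longlongrightarrow> 0) at_top"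
proof (rule relaxation_tendsto_zero[of "\<lambda>t. D t {a,b}" "\<lambda>t. \<bar>cur t {a,b}\<bar>" lyap lyap_rate "2 * excess_const" lyap_bound])
  show "((\<lambda>t. D t {a,b}) has_real_derivative \<bar>cur t {a,b}\<bar> - D t {a,b}) (at t within {0..})" if "t \<ge> 0" for t
    using D_deriv[OF that e] .
  show "(lyap has_real_derivative lyap_rate t) (at t within {0..})" if "t \<ge> 0" for t using lyap_deriv[OF that] .
  show "lyap_rate t \<ge> 0" if "t > 0" for t using lyap_rate_nonneg that by simp
  show "2 * excess_const \<ge> 0" using excess_const_nn by simp
  show "lyap t \<le> lyap_bound" if "0 \<le> t" for t using lyap_upper that by simp
  show "\<bar>\<bar>cur t {a,b}\<bar>\<bar> \<le> 2 * excess_const * lyap_rate t" if "t > 0" for t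
  proof -
    have t0: "t \<ge> 0" using that by simp
    have ab: "(a,b) \<in> arcs" "(b,a) \<in> arcs" using e arcs_iff by (auto simp: insert_commute)
    have "\<bar>cur t {a,b}\<bar> = \<bar>flow_at t a b\<bar>" using flow_snapshot.Q_arc(1)[OF snapshot[OF t0] ab(1)] Q_eq[OF t0] by simp
    also have "\<dots> \<le> excess_at t a b + excess_at t b a" using flow_snapshot.nontight_flow_bound[OF snapshot[OF t0] n1 n2] .
    also have "\<dots> \<le> 2 * (\<Sum>(w,u)\<in>arcs. excess_at t w u)" using excess_le_sum[OF t0 ab(1)] excess_le_sum[OF t0 ab(2)] by simp
    also have "\<dots> \<le> 2 * (excess_const * lyap_rate t)" using excess_sum_le_rate[OF t0] by simp
    finally show ?thesis by simp
  qed
qed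

definition "residual w t = (\<Sum>u\<in>nbr w. tsign w u * D t {w,u}) - bvec s0 s1 w"

lemma residual_deriv:
  assumes t: "t \<ge> 0"
  shows "(residual w has_real_derivative
           ((\<Sum>u\<in>nbr w. tsign w u * \<bar>cur t {w,u}\<bar>) - bvec s0 s1 w) - residual w t) (at t within {0..})"
proof -
  have "((\<lambda>\<tau>. (\<Sum>u\<in>nbr w. tsign w u * D \<tau> {w,u}) - bvec s0 s1 w) has_real_derivative
      (\<Sum>u\<in>nbr w. tsign w u * (\<bar>cur t {w,u}\<bar> - D t {w,u})) - 0) (at t within {0..})"
    by (rule DERIV_diff, rule DERIV_sum, rule DERIV_cmult, rule D_deriv[OF t]) (auto simp: nbr_def)
  moreover have "(\<Sum>u\<in>nbr w. tsign w u * (\<bar>cur t {w,u}\<bar> - D t {w,u})) - 0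
      = ((\<Sum>u\<in>nbr w. tsign w u * \<bar>cur t {w,u}\<bar>) - bvec s0 s1 w) - residual w t"
    by (simp add: residual_def sum_subtractf right_diff_distrib)
  ultimately show ?thesis unfolding residual_def[abs_def] by simp
qed

lemma residual_vanishes: assumes w: "w \<in> N" shows "(residual w \<longlongrightarrow> 0) at_top"
proof (rule relaxation_tendsto_zero[OF residual_deriv lyap_deriv])
  show "lyap_rate t \<ge> 0" if "t > 0" for t using lyap_rate_nonneg that by simp
  show "4 * excess_const \<ge> 0" using excess_const_nn by simp
  show "lyap t \<le> lyap_bound" if "0 \<le> t" for t using lyap_upper that by simp
  show "\<bar>(\<Sum>u\<in>nbr w. tsign w u * \<bar>cur t {w,u}\<bar>) - bvec s0 s1 w\<bar> \<le> 4 * excess_const * lyap_rate t"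
    if "t > 0" for t
  proof -
    have t0: "t \<ge> 0" using that by simp
    have "\<bar>(\<Sum>u\<in>nbr w. tsign w u * \<bar>cur t {w,u}\<bar>) - bvec s0 s1 w\<bar> \<le> 4 * (\<Sum>(w,u)\<in>arcs. excess_at t w u)"
      using flow_snapshot.kirchhoff_defect_le[OF snapshot[OF t0] w] by (simp add: Q_eq[OF t0])
    also have "\<dots> \<le> 4 * (excess_const * lyap_rate t)" using excess_sum_le_rate[OF t0] by simp
    finally show ?thesis by simp
  qed
qed

lemma D_le_vol_bound: assumes t: "t \<ge> 0" and e: "e \<in> E" shows "\<bar>D t e\<bar> \<le> vol_bound / L e"
proof -
  have "L e * D t e \<le> vol_at t" using flow_snapshot.edge_vol_le[OF snapshot[OF t] e] vol_at_eq[OF t] by simp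
  also have "\<dots> \<le> vol_bound" using vol_at_bounded[OF t] .
  finally have "L e * D t e \<le> vol_bound" .
  moreover have "L e > 0" using Lpos e by blast
  moreover have "D t e > 0" using D_pos[OF t e] .
  ultimately show ?thesis by (simp add: pos_le_divide_eq mult.commute)
qed

definition "D_bound_const = (\<Sum>e\<in>E. vol_bound / L e)"

lemma D_bounded: "t \<ge> 0 \<Longrightarrow> e \<in> E \<Longrightarrow> \<bar>D t e\<bar> \<le> D_bound_const"
proof -
  assume t: "t \<ge> 0" and e: "e \<in> E"
  have "vol_bound / L e \<le> D_bound_const" unfolding D_bound_const_def
    by (rule member_le_sum[OF e]) (use vol_bound_pos Lpos finE in \<open>auto intro: divide_nonneg_pos less_imp_le\<close>)
  then show ?thesis using D_le_vol_bound[OF t e] by linarith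
qed

text \<open>Every limit point of the trajectory along times tending to infinity agrees on E with a
  member of Estar: it is nonnegative, vanishes on non-tight edges and satisfies Kirchhoff's law
  in the tight orientation, because the corresponding quantities tend to zero.\<close>
lemma cluster_point_in_Estar:
  assumes trlim: "filterlim tr at_top sequentially" and tr0: "\<And>k. tr k \<ge> 0"
    and xlim: "\<And>e. e \<in> E \<Longrightarrow> (\<lambda>k. D (tr k) e) \<longlonglongrightarrow> x e"
  shows "\<exists>y\<in>Estar N E L s0 s1. \<forall>e\<in>E. y e = x e"
proof -
  have comp: "(\<lambda>k. f (tr k)) \<longlonglongrightarrow> l" if "(f \<longlongrightarrow> l) at_top" for f :: "real \<Rightarrow> real" and l
    using filterlim_compose[OF that trlim] .
  have nonneg: "\<forall>e\<in>E. x e \<ge> 0"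
  proof
    fix e assume e: "e \<in> E"
    show "x e \<ge> 0"
      by (rule LIMSEQ_le_const[OF xlim[OF e]]) (use D_pos[OF tr0 e] in \<open>auto intro: less_imp_le\<close>)
  qed
  have nontight: "\<forall>a b. {a,b} \<in> E \<longrightarrow> \<not> tight a b \<longrightarrow> \<not> tight b a \<longrightarrow> x {a,b} = 0"
  proof (intro allI impI)
    fix a b assume e: "{a,b} \<in> E" and n1: "\<not> tight a b" and n2: "\<not> tight b a"
    have "(\<lambda>k. D (tr k) {a,b}) \<longlonglongrightarrow> 0" using comp[OF nontight_edge_vanishes[OF e n1 n2]] .
    then show "x {a,b} = 0" using xlim[OF e] LIMSEQ_unique by blast
  qed
  have kirchhoff: "\<forall>w\<in>N. (\<Sum>u\<in>nbr w. tsign w u * x {w,u}) = bvec s0 s1 w"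
  proof
    fix w assume w: "w \<in> N"
    have "(\<lambda>k. residual w (tr k)) \<longlonglongrightarrow> 0" using comp[OF residual_vanishes[OF w]] .
    moreover have "(\<lambda>k. residual w (tr k)) \<longlonglongrightarrow> (\<Sum>u\<in>nbr w. tsign w u * x {w,u}) - bvec s0 s1 w"
      unfolding residual_def by (intro tendsto_intros xlim) (auto simp: nbr_def)
    ultimately show "(\<Sum>u\<in>nbr w. tsign w u * x {w,u}) = bvec s0 s1 w"
      using LIMSEQ_unique by fastforce
  qed
  show ?thesis
    using restrict_E0_in_Estar[OF nonneg kirchhoff] vanishes_off_E0[OF nonneg nontight kirchhoff]
    by (intro bexI[of _ "\<lambda>e. if e \<in> E0 E L s0 s1 then x e else 0"]) auto
qed

text \<open>The trajectory approaches Estar uniformly: otherwise there are times tending to infinity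
  at which it stays away from Estar; since D is bounded, a subsequence converges, and its limit
  agrees with a member of Estar, a contradiction.\<close>
lemma eventually_near_Estar: assumes eps: "\<epsilon> > 0"
  shows "eventually (\<lambda>t. \<exists>y\<in>Estar N E L s0 s1. \<forall>e\<in>E. \<bar>D t e - y e\<bar> < \<epsilon>) at_top"
proof (rule ccontr)
  assume "\<not> ?thesis"
  then have "\<forall>k::nat. \<exists>t\<ge>real k. \<forall>y\<in>Estar N E L s0 s1. \<exists>e\<in>E. \<bar>D t e - y e\<bar> \<ge> \<epsilon>"
    by (auto simp: not_less eventually_at_top_linorder)
  then obtain tk where tk: "\<And>k. tk k \<ge> real k"
      "\<And>k. \<forall>y\<in>Estar N E L s0 s1. \<exists>e\<in>E. \<bar>D (tk k) e - y e\<bar> \<ge> \<epsilon>"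
    by metis
  have tk0: "tk k \<ge> 0" for k using tk(1)[of k] by simp
  obtain r x where r: "strict_mono r" and x: "\<forall>e\<in>E. (\<lambda>k. D (tk (r k)) e) \<longlonglongrightarrow> x e"
    using bounded_convergent_subseq[OF finE, of "\<lambda>k. D (tk k)" D_bound_const] D_bounded tk0 by blast
  define tr where "tr k = tk (r k)" for k
  have trlim: "filterlim tr at_top sequentially"
  proof (rule filterlim_at_top_mono[OF filterlim_real_sequentially always_eventually], rule allI)
    fix k have "real k \<le> real (r k)" using seq_suble[OF r] by simp
    also have "\<dots> \<le> tr k" using tk(1) by (simp add: tr_def)
    finally show "real k \<le> tr k" .
  qed
  obtain y where yE: "y \<in> Estar N E L s0 s1" and yx: "\<forall>e\<in>E. y e = x e"
    using cluster_point_in_Estar[OF trlim, of x] x tk0 by (auto simp: tr_def)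
  have "\<forall>e\<in>E. eventually (\<lambda>k. dist (D (tr k) e) (y e) < \<epsilon>) sequentially"
    using x yx eps by (auto simp: tr_def intro: tendstoD)
  then have "eventually (\<lambda>k. \<forall>e\<in>E. \<bar>D (tr k) e - y e\<bar> < \<epsilon>) sequentially"
    by (subst eventually_ball_finite_distrib[OF finE]) (simp add: dist_real_def)
  then obtain k where "\<forall>e\<in>E. \<bar>D (tr k) e - y e\<bar> < \<epsilon>" by (auto simp: eventually_sequentially)
  moreover obtain e where "e \<in> E" "\<bar>D (tk (r k)) e - y e\<bar> \<ge> \<epsilon>" using tk(2)[of "r k"] yE by blast
  ultimately show False by (force simp: tr_def)
qed

text \<open>With a unique shortest path the set Estar is a single point, so approaching it means
  converging to it.\<close>
lemma D_tendsto_unique_path: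
  assumes sp: "shortest_path E L s0 s1 xs" and uq: "\<forall>ys. shortest_path E L s0 s1 ys \<longrightarrow> ys = xs"
    and e: "e \<in> E"
  shows "((\<lambda>t. D t e) \<longlongrightarrow> (if e \<in> path_edges xs then 1 else 0)) at_top"
proof (rule tendstoI)
  fix \<epsilon> :: real assume "\<epsilon> > 0"
  show "eventually (\<lambda>t. dist (D t e) (if e \<in> path_edges xs then 1 else 0) < \<epsilon>) at_top"
  proof (rule eventually_mono[OF eventually_near_Estar[OF \<open>\<epsilon> > 0\<close>]])
    fix t assume "\<exists>y\<in>Estar N E L s0 s1. \<forall>e\<in>E. \<bar>D t e - y e\<bar> < \<epsilon>"
    then obtain y where "y \<in> Estar N E L s0 s1" "\<bar>D t e - y e\<bar> < \<epsilon>" using e by blast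
    then show "dist (D t e) (if e \<in> path_edges xs then 1 else 0) < \<epsilon>"
      using Estar_unique_path[OF sp uq _ e] by (simp add: dist_real_def)
  qed
qed

end

theorem mainTheorem1:
  fixes N :: "'v set" and E :: "'v set set" and L :: "'v set \<Rightarrow> real"
    and s0 s1 :: 'v
    and D :: "real \<Rightarrow> 'v set \<Rightarrow> real"
    and p :: "real \<Rightarrow> 'v \<Rightarrow> real"
  assumes graph: "simple_graph N E"
    and conn: "connected_graph N E"
    and src: "s0 \<in> N" and snk: "s1 \<in> N" and dst: "s0 \<noteq> s1"
    and Lpos: "\<forall>e\<in>E. L e > 0"
    and Dinit: "\<forall>e\<in>E. D 0 e > 0"
    and pot: "\<forall>t\<ge>0. is_potential N E L (D t) s0 s1 (p t)"
    and dyn: "\<forall>t\<ge>0. \<forall>e\<in>E.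
       ((\<lambda>\<tau>. D \<tau> e) has_real_derivative (\<bar>current L (D t) (p t) e\<bar> - D t e)) (at t within {0..})"
  shows "(\<forall>q::real. q \<ge> 1 \<longrightarrow>
            ((\<lambda>t. lp_setdist q E (D t) (Estar N E L s0 s1)) \<longlongrightarrow> 0) at_top)
       \<and> ((\<lambda>t. linf_setdist E (D t) (Estar N E L s0 s1)) \<longlongrightarrow> 0) at_top
       \<and> (\<forall>xs. shortest_path E L s0 s1 xs \<and> (\<forall>ys. shortest_path E L s0 s1 ys \<longrightarrow> ys = xs) \<longrightarrow>
            (\<forall>e\<in>E. ((\<lambda>t. D t e) \<longlongrightarrow> (if e \<in> path_edges xs then 1 else 0)) at_top))"
proof -
  interpret physarum N E L s0 s1 D p
    by unfold_locales (use graph conn src snk dst Lpos Dinit pot dyn in auto)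
  have near: "eventually (\<lambda>t. \<exists>y\<in>Estar N E L s0 s1. \<forall>e\<in>E. \<bar>D t e - y e\<bar> < \<epsilon>) at_top"
    if "\<epsilon> > 0" for \<epsilon>
    using eventually_near_Estar[OF that] .
  show ?thesis
    using setdist_tendsto_zero[OF finE E_ne near] D_tendsto_unique_path by blast
qed

end
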